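(* For the operad $\operatorname{Arb}^{!}$, one has $\operatorname{Arb}^{!}(1)\cong\operatorname{Ass}(1)$ and, for every $n\ge2$, $\operatorname{Arb}^{!}(n)\cong\operatorname{Lie}(n)\oplus\operatorname{Ass}(n)$ as $\mathfrak{S}_n$-modules, where $\operatorname{Lie}(n)$ and $\operatorname{Ass}(n)$ are the arity-$n$ components of the classical operads $\operatorname{Lie}$ and $\operatorname{Ass}$.
   Context: $\operatorname{Arb}^{!}$ is the binary quadratic (linear) operad whose algebras are vector spaces $A$ with an antisymmetric bracket $[\,,\,]$ and a (non-commutative) product $*$ satisfying, for all $a,b,c\in A$: $[a,[b,c]]+[b,[c,a]]+[c,[a,b]]=0$; $[a,b]*c=0$; $a*(b*c)=0$; $[a*b,c]=0$; $a*[b,c]=(a*b)*c-(a*c)*b$. (It is the Koszul dual of the operad of shrubs, but this definition by generators and relations suffices.) *)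

theory Defs
  imports Main "HOL-Combinatorics.Permutations" "HOL-Library.Function_Algebras"
begin

datatype 'o tree = Leaf nat | Node 'o "'o tree" "'o tree"

fun leaves :: "'o tree \<Rightarrow> nat list" where
  "leaves (Leaf i) = [i]"
| "leaves (Node g l r) = leaves l @ leaves r"

text \<open>Multilinear trees of arity n: every label 0,...,n-1 occurs exactly once as a leaf.
  These form the basis of the arity-n component of the free operad on binary generators.\<close>
definition multilin :: "nat \<Rightarrow> 'o tree \<Rightarrow> bool" where
  "multilin n t \<longleftrightarrow> mset (leaves t) = mset [0..<n]"

definition comp_basis :: "nat \<Rightarrow> 'o tree set" where
  "comp_basis n = {t. multilin n t}"

fun subst :: "(nat \<Rightarrow> 'o tree) \<Rightarrow> 'o tree \<Rightarrow> 'o tree" where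
  "subst s (Leaf i) = s i"
| "subst s (Node g l r) = Node g (subst s l) (subst s r)"

definition act :: "(nat \<Rightarrow> nat) \<Rightarrow> 'o tree \<Rightarrow> 'o tree" where
  "act \<sigma> t = subst (\<lambda>i. Leaf (\<sigma> i)) t"

definition plug :: "'o tree \<Rightarrow> nat \<Rightarrow> 'o tree \<Rightarrow> 'o tree" where
  "plug C h u = subst (\<lambda>i. if i = h then u else Leaf i) C"

definition vspace :: "'b set \<Rightarrow> ('b \<Rightarrow> 'k::field) set" where
  "vspace P = {v. finite {x. v x \<noteq> 0} \<and> {x. v x \<noteq> 0} \<subseteq> P}"

definition single :: "'b \<Rightarrow> 'k::field \<Rightarrow> 'b \<Rightarrow> 'k" where
  "single b c = (\<lambda>x. if x = b then c else 0)"

definition linext :: "('a \<Rightarrow> 'b \<Rightarrow> 'k::field) \<Rightarrow> ('a \<Rightarrow> 'k) \<Rightarrow> 'b \<Rightarrow> 'k" where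
  "linext f v = (\<lambda>y. \<Sum>t\<in>{t. v t \<noteq> 0}. v t * f t y)"

definition linact :: "((nat \<Rightarrow> nat) \<Rightarrow> 'b \<Rightarrow> 'b) \<Rightarrow> (nat \<Rightarrow> nat) \<Rightarrow> ('b \<Rightarrow> 'k::field) \<Rightarrow> 'b \<Rightarrow> 'k" where
  "linact a \<sigma> w = linext (\<lambda>t. single (a \<sigma> t) 1) w"

text \<open>A relation is a linear combination (list of coefficient/tree pairs) of trees
  which are multilinear in the labels 0..m-1 (here m = 2 or 3).\<close>
type_synonym ('k, 'o) rel = "('k \<times> 'o tree) list"

definition inst :: "'k::field \<Rightarrow> 'o tree \<Rightarrow> nat \<Rightarrow> (nat \<Rightarrow> 'o tree) \<Rightarrow> ('k, 'o) rel \<Rightarrow> 'o tree \<Rightarrow> 'k" where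
  "inst a C h s r = sum_list (map (\<lambda>(c, t). single (plug C h (subst s t)) (a * c)) r)"

text \<open>Arity-n component of the operadic ideal generated by the relations: the linear span
  of all multilinear arity-n instances C[r(s_0,...,s_{m-1})] of relations r.\<close>
inductive_set ideal :: "('k::field, 'o) rel list \<Rightarrow> nat \<Rightarrow> ('o tree \<Rightarrow> 'k) set"
  for rels :: "('k, 'o) rel list" and n :: nat where
  zero: "0 \<in> ideal rels n"
| step: "\<lbrakk> r \<in> set rels; h \<in> set (leaves C);
           \<forall>(c, t) \<in> set r. multilin n (plug C h (subst s t));
           v \<in> ideal rels n \<rbrakk> \<Longrightarrow> inst a C h s r + v \<in> ideal rels n"

text \<open>The arity-n component of the operad is vspace (comp_basis n) modulo ideal rels n,
  with the symmetric group acting via act.\<close>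

abbreviation L :: "nat \<Rightarrow> 'o tree" where "L i \<equiv> Leaf i"

datatype arbop = Br | St   (* bracket [,] and product * *)
datatype lieop = LieBr
datatype assop = AssMul

definition arb_rels :: "('k::field, arbop) rel list" where
  "arb_rels =
   [ \<comment> \<open>antisymmetry: [a,b] + [b,a] = 0\<close>
     [(1, Node Br (L 0) (L 1)), (1, Node Br (L 1) (L 0))],
     \<comment> \<open>Jacobi\<close>
     [(1, Node Br (L 0) (Node Br (L 1) (L 2))), (1, Node Br (L 1) (Node Br (L 2) (L 0))),
      (1, Node Br (L 2) (Node Br (L 0) (L 1)))],
     \<comment> \<open>[a,b]*c = 0\<close>
     [(1, Node St (Node Br (L 0) (L 1)) (L 2))],
     \<comment> \<open>a*(b*c) = 0\<close>
     [(1, Node St (L 0) (Node St (L 1) (L 2)))],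
     \<comment> \<open>[a*b,c] = 0\<close>
     [(1, Node Br (Node St (L 0) (L 1)) (L 2))],
     \<comment> \<open>a*[b,c] - (a*b)*c + (a*c)*b = 0\<close>
     [(1, Node St (L 0) (Node Br (L 1) (L 2))), (-1, Node St (Node St (L 0) (L 1)) (L 2)),
      (1, Node St (Node St (L 0) (L 2)) (L 1))] ]"

definition lie_rels :: "('k::field, lieop) rel list" where
  "lie_rels =
   [ [(1, Node LieBr (L 0) (L 1)), (1, Node LieBr (L 1) (L 0))],
     [(1, Node LieBr (L 0) (Node LieBr (L 1) (L 2))), (1, Node LieBr (L 1) (Node LieBr (L 2) (L 0))),
      (1, Node LieBr (L 2) (Node LieBr (L 0) (L 1)))] ]"

definition ass_rels :: "('k::field, assop) rel list" where
  "ass_rels =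
   [ [(1, Node AssMul (Node AssMul (L 0) (L 1)) (L 2)), (-1, Node AssMul (L 0) (Node AssMul (L 1) (L 2)))] ]"

definition sum_basis :: "nat \<Rightarrow> (lieop tree + assop tree) set" where
  "sum_basis n = Inl ` comp_basis n \<union> Inr ` comp_basis n"

definition sum_rel :: "nat \<Rightarrow> (lieop tree + assop tree \<Rightarrow> 'k::field) set" where
  "sum_rel n = {(\<lambda>x. case x of Inl a \<Rightarrow> u a | Inr b \<Rightarrow> w b) | u w.
                  u \<in> ideal lie_rels n \<and> w \<in> ideal ass_rels n}"

definition sum_act :: "(nat \<Rightarrow> nat) \<Rightarrow> lieop tree + assop tree \<Rightarrow> lieop tree + assop tree" where
  "sum_act \<sigma> = map_sum (act \<sigma>) (act \<sigma>)"

text \<open>vspace P / R and vspace Q / S are isomorphic as S_n-modules: there is a linear map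
  F : vspace P \<rightarrow> vspace Q (given by its values f on the basis P) that induces a
  well-defined, bijective, S_n-equivariant map of the quotients.\<close>
definition quot_iso ::
  "'a set \<Rightarrow> ('a \<Rightarrow> 'k::field) set \<Rightarrow> ((nat \<Rightarrow> nat) \<Rightarrow> 'a \<Rightarrow> 'a) \<Rightarrow>
   'b set \<Rightarrow> ('b \<Rightarrow> 'k) set \<Rightarrow> ((nat \<Rightarrow> nat) \<Rightarrow> 'b \<Rightarrow> 'b) \<Rightarrow> nat \<Rightarrow> bool" where
  "quot_iso P R aP Q S aQ n \<longleftrightarrow>
    (\<exists>f :: 'a \<Rightarrow> 'b \<Rightarrow> 'k.
       (\<forall>t\<in>P. f t \<in> vspace Q) \<and>
       (\<forall>v\<in>R. linext f v \<in> S) \<and>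
       (\<forall>v\<in>vspace P. linext f v \<in> S \<longrightarrow> v \<in> R) \<and>
       (\<forall>w\<in>vspace Q. \<exists>v\<in>vspace P. linext f v - w \<in> S) \<and>
       (\<forall>\<sigma>. \<sigma> permutes {0..<n} \<longrightarrow>
          (\<forall>t\<in>P. f (aP \<sigma> t) - linact aQ \<sigma> (f t) \<in> S)))"

end

theory Submission
  imports Defs
begin

text \<open>
  Modulo the relations, a tree of arity n is either bracket-only, i.e. a Lie monomial, or a
  combination of left combs of products \<open>((x * y) * \<dots>) * z\<close>: a bracket above or left of a
  product vanishes, so does \<open>a*(b*c)\<close>, and \<open>a*[b,c] = (a*b)*c - (a*c)*b\<close> pushes brackets out
  of right factors while decreasing their number. Left combs are indexed by words, like the
  monomials of Ass(n). The coefficients of the left combs are computed by word polynomials: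
  right multiplication by a Lie element acts on words as right multiplication by its commutator
  polynomial in the free associative algebra, and these polynomials vanish on every relation.
  This yields a well-defined equivariant linear map to Lie(n) \<oplus> Ass(n) sending bracket-only
  trees to Lie monomials and left combs to associative monomials, which is bijective modulo the
  ideals. In arity one both sides are spanned by the single leaf.
\<close>

fun is_leaf :: "'o tree \<Rightarrow> bool" where
  "is_leaf (Leaf i) = True"
| "is_leaf (Node g l r) = False"

lemma leaves_ne_Nil: "leaves t \<noteq> []"
  by (induction t) auto

lemma plug_Leaf [simp]: "plug (Leaf i) h u = (if i = h then u else Leaf i)"
  by (simp add: plug_def)

lemma plug_Node [simp]: "plug (Node g l r) h u = Node g (plug l h u) (plug r h u)"
  by (simp add: plug_def)

lemma plug_not_in_leaves: "h \<notin> set (leaves C) \<Longrightarrow> plug C h u = C"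
  by (induction C) auto

lemma set_leaves_plug:
  "set (leaves (plug C h u)) =
     set (leaves C) - {h} \<union> (if h \<in> set (leaves C) then set (leaves u) else {})"
  by (induction C) auto

lemma leaves_plug_cong: "leaves u = leaves u' \<Longrightarrow> leaves (plug C h u) = leaves (plug C h u')"
  by (induction C) auto

lemma mset_leaves_plug_cong:
  "mset (leaves u) = mset (leaves u') \<Longrightarrow> mset (leaves (plug C h u)) = mset (leaves (plug C h u'))"
  by (induction C) auto

lemma length_leaves_plug: "h \<in> set (leaves C) \<Longrightarrow> length (leaves u) \<le> length (leaves (plug C h u))"
  by (induction C) auto

lemma length_leaves_subst: "length (leaves t) \<le> length (leaves (subst s t))"
proof (induction t)
  case (Leaf i)
  then show ?case using leaves_ne_Nil[of "s i"] by (cases "leaves (s i)") auto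
qed auto

lemma not_leaf_plug: "h \<in> set (leaves C) \<Longrightarrow> \<not> is_leaf u \<Longrightarrow> \<not> is_leaf (plug C h u)"
  by (cases C) auto

lemma distinct_leaves_plug_context:
  assumes "distinct (leaves (plug C h u))" and "leaves u \<noteq> []"
  shows "distinct (leaves C)"
  using assms
proof (induction C)
  case (Node g l r)
  have "set (leaves l) \<inter> set (leaves r) = {}"
  proof -
    have disj: "set (leaves (plug l h u)) \<inter> set (leaves (plug r h u)) = {}"
      using Node.prems(1) by simp
    from \<open>leaves u \<noteq> []\<close> obtain i where "i \<in> set (leaves u)" by (cases "leaves u") auto
    with disj show ?thesis by (auto simp: set_leaves_plug split: if_splits)
  qed
  with Node show ?case by auto
qed simp

lemma map_tree_subst: "map_tree f (subst s t) = subst (\<lambda>i. map_tree f (s i)) (map_tree f t)"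
  by (induction t) auto

lemma map_tree_plug: "map_tree f (plug C h u) = plug (map_tree f C) h (map_tree f u)"
  by (induction C) auto

lemma leaves_map_tree [simp]: "leaves (map_tree f t) = leaves t"
  by (induction t) auto

lemma multilin_distinct: "multilin n t \<Longrightarrow> distinct (leaves t)"
  unfolding multilin_def by (metis card_distinct distinct_card distinct_upt set_mset_mset size_mset)

lemma multilin_length: "multilin n t \<Longrightarrow> length (leaves t) = n"
  unfolding multilin_def by (metis length_upt minus_nat.diff_0 size_mset)

lemma multilin_leaf_less: "multilin n t \<Longrightarrow> i \<in> set (leaves t) \<Longrightarrow> i < n"
  unfolding multilin_def by (metis atLeastLessThan_iff atLeastLessThan_upt set_mset_mset)

lemma multilin_plug_cong:
  "multilin n (plug C h u) \<Longrightarrow> mset (leaves u') = mset (leaves u) \<Longrightarrow> multilin n (plug C h u')"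
  using mset_leaves_plug_cong[of u' u C h] by (simp add: multilin_def)

fun left_comb :: "'o \<Rightarrow> 'o tree \<Rightarrow> bool" where
  "left_comb g (Leaf i) = True"
| "left_comb g (Node g' l r) = (g' = g \<and> left_comb g l \<and> is_leaf r)"

definition comb :: "'o \<Rightarrow> nat list \<Rightarrow> 'o tree" where
  "comb g w = foldl (\<lambda>T j. Node g T (Leaf j)) (Leaf (hd w)) (tl w)"

lemma comb_singleton: "comb g [i] = Leaf i"
  by (simp add: comb_def)

lemma comb_snoc: "w \<noteq> [] \<Longrightarrow> comb g (w @ [j]) = Node g (comb g w) (Leaf j)"
  unfolding comb_def by (cases w) auto

lemma leaves_comb: "w \<noteq> [] \<Longrightarrow> leaves (comb g w) = w"
proof (induction w rule: rev_induct)
  case (snoc j w)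
  then show ?case by (cases "w = []") (auto simp: comb_snoc comb_singleton)
qed simp

lemma left_comb_comb: "w \<noteq> [] \<Longrightarrow> left_comb g (comb g w)"
proof (induction w rule: rev_induct)
  case (snoc j w)
  then show ?case by (cases "w = []") (auto simp: comb_snoc comb_singleton)
qed simp

lemma comb_leaves: "left_comb g t \<Longrightarrow> comb g (leaves t) = t"
proof (induction t)
  case (Leaf i)
  then show ?case by (simp add: comb_singleton)
next
  case (Node g' l r)
  then obtain j where "r = Leaf j" by (cases r) auto
  with Node show ?case by (simp add: comb_snoc leaves_ne_Nil)
qed

lemma left_comb_eq_iff_leaves:
  "w \<noteq> [] \<Longrightarrow> left_comb g t \<Longrightarrow> leaves t = w \<longleftrightarrow> t = comb g w"
  using comb_leaves leaves_comb by metis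

lemma left_comb_leaves_inj: "left_comb g t \<Longrightarrow> left_comb g t' \<Longrightarrow> leaves t = leaves t' \<Longrightarrow> t = t'"
  by (metis comb_leaves)

abbreviation supp :: "('a \<Rightarrow> 'k::zero) \<Rightarrow> 'a set" where
  "supp v \<equiv> {x. v x \<noteq> 0}"

lemma sum_apply: "(\<Sum>x\<in>A. g x) y = (\<Sum>x\<in>A. g x y)"
  by (induction A rule: infinite_finite_induct) auto

lemma linext_eq_sum:
  "finite A \<Longrightarrow> supp v \<subseteq> A \<Longrightarrow> linext f v = (\<lambda>y. \<Sum>t\<in>A. v t * f t y)"
  unfolding linext_def by (auto intro!: sum.mono_neutral_left ext)

lemma linext_add:
  assumes "finite (supp u)" "finite (supp v)"
  shows "linext f (u + v) = linext f u + linext f v"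
proof -
  let ?A = "supp u \<union> supp v"
  have A: "finite ?A" using assms by auto
  have "supp (u + v) \<subseteq> ?A" by auto
  then have "linext f (u + v) = (\<lambda>y. \<Sum>t\<in>?A. (u + v) t * f t y)" by (rule linext_eq_sum[OF A])
  moreover have "linext f u = (\<lambda>y. \<Sum>t\<in>?A. u t * f t y)" by (rule linext_eq_sum[OF A]) auto
  moreover have "linext f v = (\<lambda>y. \<Sum>t\<in>?A. v t * f t y)" by (rule linext_eq_sum[OF A]) auto
  ultimately show ?thesis by (auto simp: fun_eq_iff algebra_simps sum.distrib)
qed

lemma linext_zero [simp]: "linext f 0 = 0"
  unfolding linext_def zero_fun_def by simp

lemma linext_single: "linext f (single b c) = (\<lambda>y. c * f b y)"
proof (cases "c = 0")
  case False
  then have "supp (single b c) = {b}" by (auto simp: single_def)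
  then show ?thesis by (simp add: linext_def single_def)
qed (simp add: linext_def single_def)

lemma linext_scale: "linext f (\<lambda>x. c * v x) = (\<lambda>y. c * linext f v y)"
proof (cases "c = 0")
  case False
  then have "supp (\<lambda>x. c * v x) = supp v" by auto
  then show ?thesis by (simp add: linext_def sum_distrib_left mult.assoc)
qed (simp add: linext_def)

lemma linext_diff:
  assumes "finite (supp u)" "finite (supp v)"
  shows "linext f (u - v) = linext f u - linext f v"
proof -
  let ?A = "supp u \<union> supp v"
  have A: "finite ?A" using assms by auto
  have "supp (u - v) \<subseteq> ?A" by auto
  then have "linext f (u - v) = (\<lambda>y. \<Sum>t\<in>?A. (u - v) t * f t y)" by (rule linext_eq_sum[OF A])
  moreover have "linext f u = (\<lambda>y. \<Sum>t\<in>?A. u t * f t y)" by (rule linext_eq_sum[OF A]) auto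
  moreover have "linext f v = (\<lambda>y. \<Sum>t\<in>?A. v t * f t y)" by (rule linext_eq_sum[OF A]) auto
  ultimately show ?thesis by (auto simp: fun_eq_iff algebra_simps sum_subtractf)
qed

lemma finite_supp_single: "finite (supp (single b c))"
  by (rule finite_subset[of _ "{b}"]) (auto simp: single_def)

lemma single_in_vspace: "t \<in> P \<Longrightarrow> single t c \<in> vspace P"
  unfolding vspace_def using finite_supp_single[of t c] by (auto simp: single_def)

lemma zero_in_vspace: "0 \<in> vspace P"
  unfolding vspace_def by simp

lemma vspace_add: "u \<in> vspace P \<Longrightarrow> v \<in> vspace P \<Longrightarrow> u + v \<in> vspace P"
proof -
  assume "u \<in> vspace P" "v \<in> vspace P"
  moreover have "supp (u + v) \<subseteq> supp u \<union> supp v" by auto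
  ultimately show ?thesis unfolding vspace_def by (auto intro: finite_subset)
qed

lemma vspace_scale: "v \<in> vspace P \<Longrightarrow> (\<lambda>y. c * v y) \<in> vspace P"
  unfolding vspace_def by (auto intro: finite_subset[of _ "supp v"])

lemma linext_single_apply_inj:
  "inj a \<Longrightarrow> finite (supp w) \<Longrightarrow> linext (\<lambda>t. single (a t) 1) w (a x) = w x"
  unfolding linext_def single_def by (auto simp: inj_eq if_distrib cong: if_cong)

lemma surj_mod_subspace_from_basis:
  fixes f :: "'a \<Rightarrow> 'b \<Rightarrow> 'k::field"
  assumes basis: "\<forall>e\<in>Q. \<exists>v\<in>vspace P. linext f v - single e 1 \<in> S"
    and zero: "0 \<in> S" and add: "\<And>a b. a \<in> S \<Longrightarrow> b \<in> S \<Longrightarrow> a + b \<in> S"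
    and scale: "\<And>c a. a \<in> S \<Longrightarrow> (\<lambda>y. c * a y) \<in> S"
    and w: "w \<in> vspace Q"
  shows "\<exists>v\<in>vspace P. linext f v - w \<in> S"
proof -
  have "\<forall>w. supp w \<subseteq> A \<longrightarrow> supp w \<subseteq> Q \<longrightarrow> (\<exists>v\<in>vspace P. linext f v - w \<in> S)"
    if "finite A" for A
    using that
  proof (induction A rule: finite_induct)
    case empty
    show ?case
    proof clarify
      fix w :: "'b \<Rightarrow> 'k" assume "supp w \<subseteq> {}"
      then have "w = 0" by (auto simp: fun_eq_iff)
      then show "\<exists>v\<in>vspace P. linext f v - w \<in> S"
        using zero zero_in_vspace by (metis linext_zero diff_self)
    qed
  next
    case (insert e A)
    show ?case
    proof clarify
      fix w :: "'b \<Rightarrow> 'k" assume w: "supp w \<subseteq> insert e A" "supp w \<subseteq> Q"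
      define w' where "w' = w(e := 0)"
      have "supp w' \<subseteq> A" "supp w' \<subseteq> Q" using w by (auto simp: w'_def)
      then obtain v' where v': "v' \<in> vspace P" "linext f v' - w' \<in> S" using insert.IH by blast
      show "\<exists>v\<in>vspace P. linext f v - w \<in> S"
      proof (cases "w e = 0")
        case True
        then have "w' = w" by (auto simp: w'_def)
        then show ?thesis using v' by blast
      next
        case False
        then have "e \<in> Q" using w by auto
        then obtain ve where ve: "ve \<in> vspace P" "linext f ve - single e 1 \<in> S"
          using basis by blast
        define v where "v = v' + (\<lambda>x. w e * ve x)"
        have v: "v \<in> vspace P" unfolding v_def by (rule vspace_add[OF v'(1) vspace_scale[OF ve(1)]])
        have fin: "finite (supp v')" "finite (supp (\<lambda>x. w e * ve x))"
          using v'(1) vspace_scale[OF ve(1)] by (auto simp: vspace_def)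
        have "linext f v - w = (linext f v' - w') + (\<lambda>y. w e * (linext f ve - single e 1) y)"
          unfolding v_def linext_add[OF fin] linext_scale
          by (auto simp: fun_eq_iff w'_def single_def right_diff_distrib)
        then show ?thesis using v add[OF v'(2) scale[OF ve(2)]] by metis
      qed
    qed
  qed
  with w show ?thesis unfolding vspace_def by blast
qed

lemma inst_Nil [simp]: "inst a C h s [] = 0"
  by (simp add: inst_def)

lemma inst_Cons [simp]:
  "inst a C h s ((c, t) # r) = single (plug C h (subst s t)) (a * c) + inst a C h s r"
  by (simp add: inst_def)

lemma supp_inst: "supp (inst a C h s r) \<subseteq> (\<lambda>(c, t). plug C h (subst s t)) ` set r"
  by (induction r) (auto simp: single_def)

lemma finite_supp_inst: "finite (supp (inst a C h s r))"
  by (rule finite_subset[OF supp_inst]) auto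

lemma linext_inst:
  "linext f (inst a C h s r) = (\<lambda>y. \<Sum>(c, t)\<leftarrow>r. a * c * f (plug C h (subst s t)) y)"
proof (induction r)
  case Nil
  then show ?case by (simp add: linext_def fun_eq_iff)
next
  case (Cons x r)
  obtain c t where x: "x = (c, t)" by fastforce
  show ?case
    unfolding x inst_Cons linext_add[OF finite_supp_single finite_supp_inst] linext_single Cons
    by (simp add: fun_eq_iff)
qed

lemma inst_scale: "inst (c * a) C h s r = (\<lambda>y. c * inst a C h s r y)"
  by (induction r) (auto simp: fun_eq_iff single_def distrib_left mult.assoc)

lemma inst_in_ideal:
  "r \<in> set rels \<Longrightarrow> h \<in> set (leaves C) \<Longrightarrow> \<forall>(c, t) \<in> set r. multilin n (plug C h (subst s t))
   \<Longrightarrow> inst a C h s r \<in> ideal rels n"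
  using ideal.step[OF _ _ _ ideal.zero] by fastforce

lemma ideal_subset_vspace: "v \<in> ideal rels n \<Longrightarrow> v \<in> vspace (comp_basis n)"
proof (induction rule: ideal.induct)
  case (step r h C s v a)
  have "supp (inst a C h s r) \<subseteq> comp_basis n"
    using supp_inst[of a C h s r] step.hyps(3) by (auto simp: comp_basis_def)
  then have "inst a C h s r \<in> vspace (comp_basis n)"
    using finite_supp_inst by (auto simp: vspace_def)
  with step.IH show ?case using vspace_add by blast
qed (rule zero_in_vspace)

lemma finite_supp_ideal: "v \<in> ideal rels n \<Longrightarrow> finite (supp v)"
  using ideal_subset_vspace by (auto simp: vspace_def)

lemma ideal_add: "u \<in> ideal rels n \<Longrightarrow> v \<in> ideal rels n \<Longrightarrow> u + v \<in> ideal rels n"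
proof (induction rule: ideal.induct)
  case (step r h C s v' a)
  then show ?case using ideal.step[of r rels h C n s "v' + v" a] by (metis add.assoc)
qed simp

lemma ideal_scale: "v \<in> ideal rels n \<Longrightarrow> (\<lambda>y. c * v y) \<in> ideal rels n"
proof (induction rule: ideal.induct)
  case zero
  then show ?case using ideal.zero by (simp add: zero_fun_def)
next
  case (step r h C s v a)
  have "(\<lambda>y. c * (inst a C h s r + v) y) = inst (c * a) C h s r + (\<lambda>y. c * v y)"
    by (simp add: inst_scale fun_eq_iff distrib_left)
  then show ?case using ideal.step[OF step.hyps(1-3) step.IH] by simp
qed

lemma ideal_diff: "u \<in> ideal rels n \<Longrightarrow> v \<in> ideal rels n \<Longrightarrow> u - v \<in> ideal rels n"
proof -
  assume "u \<in> ideal rels n" "v \<in> ideal rels n"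
  moreover have "u - v = u + (\<lambda>y. (-1) * v y)" by (simp add: fun_eq_iff)
  ultimately show ?thesis using ideal_add ideal_scale by metis
qed

lemma ideal_sum:
  "finite A \<Longrightarrow> (\<And>x. x \<in> A \<Longrightarrow> g x \<in> ideal rels n) \<Longrightarrow> (\<Sum>x\<in>A. g x) \<in> ideal rels n"
  by (induction A rule: finite_induct) (auto intro: ideal.zero ideal_add)

lemma linext_ideal_eq_0:
  assumes "\<And>r h C s a. r \<in> set rels \<Longrightarrow> h \<in> set (leaves C) \<Longrightarrow>
             \<forall>(c, t) \<in> set r. multilin n (plug C h (subst s t)) \<Longrightarrow> linext f (inst a C h s r) = 0"
  shows "v \<in> ideal rels n \<Longrightarrow> linext f v = 0"
proof (induction rule: ideal.induct)
  case (step r h C s v a)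
  then show ?case
    using linext_add[OF finite_supp_inst finite_supp_ideal[OF step.hyps(4)]] assms
    by (metis add.right_neutral)
qed (rule linext_zero)

lemma linext_ideal_in_ideal:
  assumes "\<And>r h C s a. r \<in> set rels \<Longrightarrow> h \<in> set (leaves C) \<Longrightarrow>
             \<forall>(c, t) \<in> set r. multilin n (plug C h (subst s t)) \<Longrightarrow> linext f (inst a C h s r) \<in> ideal rels' n"
  shows "v \<in> ideal rels n \<Longrightarrow> linext f v \<in> ideal rels' n"
proof (induction rule: ideal.induct)
  case (step r h C s v a)
  then show ?case
    using linext_add[OF finite_supp_inst finite_supp_ideal[OF step.hyps(4)]] assms ideal_add by metis
qed (simp only: linext_zero, rule ideal.zero)

lemma ideal_arity_one:
  assumes "\<forall>r\<in>set rels. \<forall>(c, t)\<in>set r. 2 \<le> length (leaves t)"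
  shows "v \<in> ideal rels 1 \<Longrightarrow> v = 0"
proof (induction rule: ideal.induct)
  case (step r h C s v a)
  show ?case
  proof (cases r)
    case (Cons x r')
    obtain c t where x: "x = (c, t)" by fastforce
    have "length (leaves (plug C h (subst s t))) = 1"
      using step.hyps(3) Cons x multilin_length by fastforce
    moreover have "2 \<le> length (leaves t)" using assms step.hyps(1) Cons x by fastforce
    ultimately show ?thesis
      using length_leaves_plug[OF step.hyps(2), of "subst s t"] length_leaves_subst[of t s] by simp
  qed (simp add: step.IH)
qed simp

section \<open>Word polynomials of trees\<close>

text \<open>The product of the free associative algebra on functions on words: its value at \<open>w\<close>
  is the sum of \<open>p u * q v\<close> over all splittings \<open>w = u @ v\<close>.\<close>

fun concat_prod :: "(nat list \<Rightarrow> 'k::field) \<Rightarrow> (nat list \<Rightarrow> 'k) \<Rightarrow> nat list \<Rightarrow> 'k" where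
  "concat_prod p q [] = p [] * q []"
| "concat_prod p q (x # w) = p [] * q (x # w) + concat_prod (\<lambda>u. p (x # u)) q w"

lemma concat_prod_add_left: "concat_prod (\<lambda>u. p u + p' u) q w = concat_prod p q w + concat_prod p' q w"
  by (induction w arbitrary: p p') (auto simp: algebra_simps)

lemma concat_prod_scale_left: "concat_prod (\<lambda>u. c * p u) q w = c * concat_prod p q w"
  by (induction w arbitrary: p) (auto simp: algebra_simps)

lemma concat_prod_zero_left: "concat_prod (\<lambda>u. 0) q w = 0"
  by (induction w) auto

lemma concat_prod_add_right: "concat_prod p (\<lambda>u. q u + q' u) w = concat_prod p q w + concat_prod p q' w"
  by (induction w arbitrary: p) (auto simp: algebra_simps)

lemma concat_prod_scale_right: "concat_prod p (\<lambda>u. c * q u) w = c * concat_prod p q w"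
  by (induction w arbitrary: p) (auto simp: algebra_simps)

lemma concat_prod_zero_right: "concat_prod p (\<lambda>u. 0) w = 0"
  by (induction w arbitrary: p) auto

lemma concat_prod_0 [simp]: "concat_prod 0 q = 0" "concat_prod p 0 = 0"
  using concat_prod_zero_left concat_prod_zero_right by (auto simp: fun_eq_iff zero_fun_def)

lemma concat_prod_diff_left:
  "concat_prod (\<lambda>u. p u - p' u) q w = concat_prod p q w - concat_prod p' q w"
  using concat_prod_add_left[of p "\<lambda>u. (-1) * p' u"] concat_prod_scale_left[of "-1" p'] by simp

lemma concat_prod_diff_right:
  "concat_prod p (\<lambda>u. q u - q' u) w = concat_prod p q w - concat_prod p q' w"
  using concat_prod_add_right[of p q "\<lambda>u. (-1) * q' u"] concat_prod_scale_right[of p "-1" q'] by simp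

lemma concat_prod_sum_list_left:
  "concat_prod (\<lambda>v. \<Sum>x\<leftarrow>xs. c x * F x v) q w = (\<Sum>x\<leftarrow>xs. c x * concat_prod (F x) q w)"
  by (induction xs) (auto simp: concat_prod_zero_left concat_prod_add_left concat_prod_scale_left)

lemma concat_prod_sum_list_right:
  "concat_prod p (\<lambda>v. \<Sum>x\<leftarrow>xs. c x * F x v) w = (\<Sum>x\<leftarrow>xs. c x * concat_prod p (F x) w)"
  by (induction xs) (auto simp: concat_prod_zero_right concat_prod_add_right concat_prod_scale_right)

lemma concat_prod_assoc: "concat_prod (concat_prod p q) r w = concat_prod p (concat_prod q r) w"
proof (induction w arbitrary: p q)
  case (Cons x w)
  have "(\<lambda>u. concat_prod p q (x # u)) = (\<lambda>u. p [] * q (x # u) + concat_prod (\<lambda>v. p (x # v)) q u)"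
    by simp
  then show ?case
    by (simp only: concat_prod.simps concat_prod_add_left concat_prod_scale_left Cons)
      (simp add: algebra_simps)
qed (simp add: algebra_simps)

lemma concat_prod_single_left:
  "concat_prod (single u a) q w = (if take (length u) w = u then a * q (drop (length u) w) else 0)"
proof (induction w arbitrary: u)
  case Nil
  then show ?case by (auto simp: single_def)
next
  case (Cons x w)
  show ?case
  proof (cases u)
    case Nil
    have "(\<lambda>v. single [] a (x # v)) = (\<lambda>v. 0)" by (auto simp: single_def)
    with Nil show ?thesis by (simp add: single_def concat_prod_zero_left)
  next
    case (Cons y u')
    have "(\<lambda>v. single (y # u') a (x # v)) = (if x = y then single u' a else (\<lambda>v. 0))"
      by (auto simp: single_def fun_eq_iff)
    with Cons Cons.IH show ?thesis by (auto simp: single_def concat_prod_zero_left)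
  qed
qed

lemma concat_prod_single: "concat_prod (single u a) (single v b) = single (u @ v) (a * b)"
  by (rule ext, unfold concat_prod_single_left) (auto simp: single_def, metis append_take_drop_id)

lemma concat_prod_map:
  "concat_prod p q (map \<sigma> w) = concat_prod (\<lambda>u. p (map \<sigma> u)) (\<lambda>u. q (map \<sigma> u)) w"
  by (induction w arbitrary: p) auto

lemma concat_prod_nonzero_split:
  "concat_prod p q w \<noteq> 0 \<Longrightarrow> \<exists>u v. w = u @ v \<and> p u \<noteq> 0 \<and> q v \<noteq> 0"
proof (induction w arbitrary: p)
  case (Cons x w)
  show ?case
  proof (cases "p [] * q (x # w) = 0")
    case True
    then have "concat_prod (\<lambda>u. p (x # u)) q w \<noteq> 0" using Cons.prems by auto
    from Cons.IH[OF this] obtain u v where "w = u @ v" "p (x # u) \<noteq> 0" "q v \<noteq> 0" by blast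
    then show ?thesis by (intro exI[of _ "x # u"] exI[of _ v]) auto
  next
    case False
    then show ?thesis by (intro exI[of _ "[]"] exI[of _ "x # w"]) auto
  qed
qed auto

fun bracket_only :: "arbop tree \<Rightarrow> bool" where
  "bracket_only (Leaf i) = True"
| "bracket_only (Node g l r) = (g = Br \<and> bracket_only l \<and> bracket_only r)"

text \<open>The image of a Lie monomial in the free associative algebra on the leaves.\<close>

fun lie_poly :: "arbop tree \<Rightarrow> nat list \<Rightarrow> 'k::field" where
  "lie_poly (Leaf i) = single [i] 1"
| "lie_poly (Node Br a b) = concat_prod (lie_poly a) (lie_poly b) - concat_prod (lie_poly b) (lie_poly a)"
| "lie_poly (Node St a b) = 0"

text \<open>The coordinates of a tree with respect to the left combs of products: the relation
  \<open>a*[b,c] = (a*b)*c - (a*c)*b\<close> says that right multiplication by a Lie element acts on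
  words as right multiplication by its commutator polynomial.\<close>

fun word_poly :: "arbop tree \<Rightarrow> nat list \<Rightarrow> 'k::field" where
  "word_poly (Leaf i) = 0"
| "word_poly (Node Br a b) = 0"
| "word_poly (Node St a b) =
     concat_prod (if is_leaf a then lie_poly a else word_poly a) (lie_poly b)"

definition factor_poly :: "arbop tree \<Rightarrow> nat list \<Rightarrow> 'k::field" where
  "factor_poly t = (if is_leaf t then lie_poly t else word_poly t)"

lemma word_poly_St: "word_poly (Node St a b) = concat_prod (factor_poly a) (lie_poly b)"
  by (simp add: factor_poly_def)

lemmas word_poly_simps = word_poly.simps(1,2) word_poly_St

lemma lie_poly_nonzero_mset: "(lie_poly t w :: 'k::field) \<noteq> 0 \<Longrightarrow> mset w = mset (leaves t)"
proof (induction t arbitrary: w rule: lie_poly.induct)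
  case (2 a b)
  then have "(concat_prod (lie_poly a) (lie_poly b) w :: 'k) \<noteq> 0
           \<or> (concat_prod (lie_poly b) (lie_poly a) w :: 'k) \<noteq> 0" by auto
  with 2 show ?case by (auto dest!: concat_prod_nonzero_split)
qed (auto simp: single_def split: if_splits)

lemma word_poly_nonzero_mset:
  "(word_poly t w :: 'k::field) \<noteq> 0 \<Longrightarrow> mset w = mset (leaves t) \<and> 2 \<le> length w"
proof (induction t arbitrary: w)
  case (Node g a b)
  then have g: "g = St" by (cases g) auto
  with Node.prems have "(concat_prod (factor_poly a) (lie_poly b) w :: 'k) \<noteq> 0"
    by (simp add: factor_poly_def)
  then obtain u v where uv: "w = u @ v" "(factor_poly a u :: 'k) \<noteq> 0" "(lie_poly b v :: 'k) \<noteq> 0"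
    using concat_prod_nonzero_split by blast
  have "mset u = mset (leaves a)"
    using uv(2) Node.IH(1)[of u] lie_poly_nonzero_mset[of a u] by (auto simp: factor_poly_def split: if_splits)
  moreover have "mset v = mset (leaves b)" using uv(3) lie_poly_nonzero_mset by blast
  moreover have "u \<noteq> []" "v \<noteq> []"
    using calculation leaves_ne_Nil[of a] leaves_ne_Nil[of b] by auto
  ultimately show ?case using uv(1) g by (cases u; cases v) auto
qed simp

lemma word_poly_Nil: "word_poly t [] = 0"
  using word_poly_nonzero_mset by fastforce

lemma word_poly_bracket_only: "bracket_only t \<Longrightarrow> word_poly t = 0"
  by (cases t rule: word_poly.cases) auto

lemma factor_poly_left_comb: "left_comb St t \<Longrightarrow> factor_poly t = single (leaves t) 1"
proof (induction t)
  case (Node g l r)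
  then obtain j where "r = Leaf j" "g = St" by (cases r) auto
  with Node show ?case by (simp add: factor_poly_def concat_prod_single word_poly_St)
qed (simp add: factor_poly_def)

lemma word_poly_left_comb:
  "left_comb St t \<Longrightarrow> \<not> is_leaf t \<Longrightarrow> word_poly t = single (leaves t) 1"
  by (metis factor_poly_def factor_poly_left_comb)

definition to_lie :: "arbop tree \<Rightarrow> lieop tree" where
  "to_lie = map_tree (\<lambda>_. LieBr)"

definition of_lie :: "lieop tree \<Rightarrow> arbop tree" where
  "of_lie = map_tree (\<lambda>_. Br)"

lemma leaves_to_lie [simp]: "leaves (to_lie t) = leaves t"
  by (simp add: to_lie_def)

lemma leaves_of_lie [simp]: "leaves (of_lie t) = leaves t"
  by (simp add: of_lie_def)

lemma to_lie_of_lie [simp]: "to_lie (of_lie x) = x"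
proof -
  have "map_tree (\<lambda>_. LieBr) t = t" for t :: "lieop tree"
  proof (induction t)
    case (Node g l r)
    then show ?case by (cases g) auto
  qed simp
  then show ?thesis by (simp add: to_lie_def of_lie_def tree.map_comp o_def)
qed

lemma bracket_only_of_lie [simp]: "bracket_only (of_lie x)"
  unfolding of_lie_def by (induction x) auto

lemma of_lie_to_lie: "bracket_only t \<Longrightarrow> of_lie (to_lie t) = t"
  unfolding to_lie_def of_lie_def by (induction t) auto

lemma bracket_only_plug:
  "bracket_only (plug C h u) \<longleftrightarrow> bracket_only C \<and> (h \<in> set (leaves C) \<longrightarrow> bracket_only u)"
  by (induction C) auto

lemma bracket_only_subst:
  "bracket_only (subst s t) \<longleftrightarrow> bracket_only t \<and> (\<forall>i\<in>set (leaves t). bracket_only (s i))"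
  by (induction t) auto

definition lie_part :: "arbop tree \<Rightarrow> lieop tree \<Rightarrow> 'k::field" where
  "lie_part t = (if bracket_only t then single (to_lie t) 1 else 0)"

definition ass_part :: "arbop tree \<Rightarrow> assop tree \<Rightarrow> 'k::field" where
  "ass_part t b = (if left_comb AssMul b then word_poly t (leaves b) else 0)"

definition arb_map :: "arbop tree \<Rightarrow> lieop tree + assop tree \<Rightarrow> 'k::field" where
  "arb_map t = (\<lambda>x. case x of Inl a \<Rightarrow> lie_part t a | Inr b \<Rightarrow> ass_part t b)"

lemma linext_arb_map:
  "linext arb_map v = (\<lambda>x. case x of Inl a \<Rightarrow> linext lie_part v a | Inr b \<Rightarrow> linext ass_part v b)"
  by (auto simp: linext_def arb_map_def fun_eq_iff split: sum.splits)

lemma linext_ass_part: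
  "linext ass_part v b = (if left_comb AssMul b then linext word_poly v (leaves b) else 0)"
  by (auto simp: linext_def ass_part_def)

definition poly_null :: "('a \<Rightarrow> 'k::field) \<Rightarrow> ('a \<Rightarrow> arbop tree) \<Rightarrow> 'a list \<Rightarrow> bool" where
  "poly_null c u xs \<longleftrightarrow>
     (\<forall>w. (\<Sum>x\<leftarrow>xs. c x * lie_poly (u x) w) = 0) \<and> (\<forall>w. (\<Sum>x\<leftarrow>xs. c x * word_poly (u x) w) = 0)"

lemma poly_null_scale: "poly_null c u xs \<Longrightarrow> poly_null (\<lambda>x. a * c x) u xs"
  by (simp add: poly_null_def mult.assoc sum_list_const_mult)

lemma poly_null_Node_left:
  assumes not_leaf: "\<forall>x\<in>set xs. \<not> is_leaf (u x)" and null: "poly_null c u xs"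
  shows "poly_null c (\<lambda>x. Node g (u x) r) xs"
proof -
  have lie: "(\<lambda>v. \<Sum>x\<leftarrow>xs. c x * lie_poly (u x) v) = (\<lambda>v. 0)"
    and word: "(\<lambda>v. \<Sum>x\<leftarrow>xs. c x * word_poly (u x) v) = (\<lambda>v. 0)"
    using null by (auto simp: poly_null_def)
  have "(\<lambda>v. \<Sum>x\<leftarrow>xs. c x * factor_poly (u x) v) = (\<lambda>v. \<Sum>x\<leftarrow>xs. c x * word_poly (u x) v)"
    using not_leaf by (auto simp: factor_poly_def intro!: ext arg_cong[where f = sum_list])
  with lie word show ?thesis
    by (cases g) (simp_all del: word_poly.simps add: word_poly_simps poly_null_def fun_diff_def
        right_diff_distrib sum_list_subtractf concat_prod_sum_list_left[symmetric]
        concat_prod_sum_list_right[symmetric] concat_prod_zero_left concat_prod_zero_right)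
qed

lemma poly_null_Node_right:
  assumes "poly_null c u xs"
  shows "poly_null c (\<lambda>x. Node g l (u x)) xs"
proof -
  have lie: "(\<lambda>v. \<Sum>x\<leftarrow>xs. c x * lie_poly (u x) v) = (\<lambda>v. 0)"
    using assms by (auto simp: poly_null_def)
  then show ?thesis
    by (cases g) (simp_all del: word_poly.simps add: word_poly_simps poly_null_def fun_diff_def
        right_diff_distrib sum_list_subtractf concat_prod_sum_list_left[symmetric]
        concat_prod_sum_list_right[symmetric] concat_prod_zero_left concat_prod_zero_right)
qed

text \<open>Distinct leaves make the hole occur exactly once, so grafting acts linearly.\<close>

lemma poly_null_plug:
  assumes "\<forall>x\<in>set xs. \<not> is_leaf (u x)" and "poly_null c u xs"
  shows "distinct (leaves C) \<Longrightarrow> h \<in> set (leaves C) \<Longrightarrow> poly_null c (\<lambda>x. plug C h (u x)) xs"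
proof (induction C)
  case (Leaf j)
  with assms show ?case by simp
next
  case (Node g l r)
  show ?case
  proof (cases "h \<in> set (leaves l)")
    case True
    with Node.prems have "h \<notin> set (leaves r)" by auto
    moreover have "\<forall>x\<in>set xs. \<not> is_leaf (plug l h (u x))"
      using assms(1) not_leaf_plug[OF True] by blast
    ultimately show ?thesis
      using poly_null_Node_left Node True by (simp add: plug_not_in_leaves)
  next
    case False
    with Node show ?thesis using poly_null_Node_right by (simp add: plug_not_in_leaves)
  qed
qed

lemma arb_rel_poly_null: "r \<in> set arb_rels \<Longrightarrow> poly_null fst (\<lambda>x. subst s (snd x)) r"
  unfolding arb_rels_def poly_null_def
  by (simp only: set_simps insert_iff empty_iff, elim disjE)
    (simp_all del: word_poly.simps add: word_poly_simps fun_diff_def factor_poly_def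
      concat_prod_diff_left concat_prod_diff_right concat_prod_assoc algebra_simps)

lemma arb_rel_not_leaf: "r \<in> set arb_rels \<Longrightarrow> \<forall>x\<in>set r. \<not> is_leaf (subst s (snd x))"
  and arb_rel_ne_Nil: "r \<in> set arb_rels \<Longrightarrow> r \<noteq> []"
  by (auto simp: arb_rels_def)

lemma linext_word_poly_ideal: "v \<in> ideal arb_rels n \<Longrightarrow> linext word_poly v = 0"
proof (rule linext_ideal_eq_0)
  fix r h C s a
  assume r: "r \<in> set arb_rels" and h: "h \<in> set (leaves C)"
    and ml: "\<forall>(c, t) \<in> set r. multilin n (plug C h (subst s t))"
  obtain x0 where "x0 \<in> set r" using arb_rel_ne_Nil[OF r] by (cases r) auto
  with ml have "distinct (leaves (plug C h (subst s (snd x0))))"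
    using multilin_distinct by fastforce
  then have "distinct (leaves C)" using distinct_leaves_plug_context leaves_ne_Nil by blast
  then have "poly_null (\<lambda>x. a * fst x) (\<lambda>x. plug C h (subst s (snd x))) r"
    using poly_null_plug[where u = "\<lambda>x. subst s (snd x)", OF arb_rel_not_leaf[OF r]
        poly_null_scale[OF arb_rel_poly_null[OF r]]] h
    by blast
  then show "linext word_poly (inst a C h s r) = 0"
    unfolding linext_inst by (simp add: poly_null_def fun_eq_iff split_def)
qed

definition lift_rel :: "('k \<times> lieop tree) list \<Rightarrow> ('k \<times> arbop tree) list" where
  "lift_rel rl = map (\<lambda>(c, t). (c, of_lie t)) rl"

lemma lift_rel_in_arb_rels: "rl \<in> set lie_rels \<Longrightarrow> lift_rel rl \<in> set arb_rels"
  unfolding lie_rels_def arb_rels_def lift_rel_def of_lie_def by auto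

lemma arb_rels_cases:
  "r \<in> set arb_rels \<Longrightarrow> (\<exists>rl \<in> set lie_rels. r = lift_rel rl) \<or> (\<forall>x\<in>set r. \<not> bracket_only (snd x))"
  unfolding arb_rels_def lie_rels_def lift_rel_def of_lie_def by auto

lemma lie_rels_same_leaves: "rl \<in> set lie_rels \<Longrightarrow> \<exists>K. \<forall>x\<in>set rl. set (leaves (snd x)) = K"
  unfolding lie_rels_def by auto

lemma to_lie_plug_subst:
  "to_lie (plug C h (subst s (of_lie t))) = plug (to_lie C) h (subst (\<lambda>i. to_lie (s i)) t)"
  unfolding to_lie_def by (simp add: map_tree_plug map_tree_subst to_lie_of_lie[unfolded to_lie_def])

lemma of_lie_plug_subst:
  "of_lie (plug C h (subst s t)) = plug (of_lie C) h (subst (\<lambda>i. of_lie (s i)) (of_lie t))"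
  unfolding of_lie_def by (simp add: map_tree_plug map_tree_subst)

lemma linext_lie_part_inst_lift_rel:
  assumes "\<forall>x\<in>set rl. set (leaves (snd x)) = K" and "h \<in> set (leaves C)"
  shows "linext lie_part (inst a C h s (lift_rel rl)) =
    (if bracket_only C \<and> (\<forall>i\<in>K. bracket_only (s i)) then inst a (to_lie C) h (\<lambda>i. to_lie (s i)) rl
     else 0)"
  using assms
proof (induction rl)
  case Nil
  then show ?case by (simp add: lift_rel_def linext_def zero_fun_def)
next
  case (Cons x rl)
  obtain c t where x: "x = (c, t)" by fastforce
  have K: "set (leaves t) = K" using Cons.prems x by auto
  have IH: "linext lie_part (inst a C h s (lift_rel rl)) =
    (if bracket_only C \<and> (\<forall>i\<in>K. bracket_only (s i)) then inst a (to_lie C) h (\<lambda>i. to_lie (s i)) rl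
     else 0)"
    using Cons by simp
  have "inst a C h s (lift_rel (x # rl)) =
      single (plug C h (subst s (of_lie t))) (a * c) + inst a C h s (lift_rel rl)"
    by (simp add: lift_rel_def x)
  then have "linext lie_part (inst a C h s (lift_rel (x # rl))) =
      (\<lambda>y. a * c * lie_part (plug C h (subst s (of_lie t))) y) + linext lie_part (inst a C h s (lift_rel rl))"
    by (simp only: linext_add[OF finite_supp_single finite_supp_inst] linext_single)
  also have "\<dots> = (if bracket_only C \<and> (\<forall>i\<in>K. bracket_only (s i))
      then inst a (to_lie C) h (\<lambda>i. to_lie (s i)) (x # rl) else 0)"
    unfolding IH using K Cons.prems(2)
    by (auto simp: lie_part_def bracket_only_plug bracket_only_subst to_lie_plug_subst fun_eq_iff
        single_def x)
  finally show ?case .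
qed

lemma linext_lie_part_inst_in_ideal:
  assumes r: "r \<in> set arb_rels" and h: "h \<in> set (leaves C)"
    and ml: "\<forall>(c, t) \<in> set r. multilin n (plug C h (subst s t))"
  shows "linext lie_part (inst a C h s r) \<in> ideal lie_rels n"
  using arb_rels_cases[OF r]
proof
  assume "\<exists>rl \<in> set lie_rels. r = lift_rel rl"
  then obtain rl where rl: "rl \<in> set lie_rels" "r = lift_rel rl" by blast
  obtain K where K: "\<forall>x\<in>set rl. set (leaves (snd x)) = K" using lie_rels_same_leaves[OF rl(1)] by blast
  have "inst a (to_lie C) h (\<lambda>i. to_lie (s i)) rl \<in> ideal lie_rels n"
  proof (rule inst_in_ideal[OF rl(1)])
    show "h \<in> set (leaves (to_lie C))" using h by simp
    show "\<forall>(c, t)\<in>set rl. multilin n (plug (to_lie C) h (subst (\<lambda>i. to_lie (s i)) t))"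
    proof clarify
      fix c t assume "(c, t) \<in> set rl"
      then have "(c, of_lie t) \<in> set r" using rl(2) by (force simp: lift_rel_def)
      then have "multilin n (plug C h (subst s (of_lie t)))" using ml by auto
      then show "multilin n (plug (to_lie C) h (subst (\<lambda>i. to_lie (s i)) t))"
        using to_lie_plug_subst[of C h s t] by (metis multilin_def leaves_to_lie)
    qed
  qed
  then show ?thesis
    using linext_lie_part_inst_lift_rel[OF K h, of a s] ideal.zero rl(2) by auto
next
  assume "\<forall>x\<in>set r. \<not> bracket_only (snd x)"
  then have "linext lie_part (inst a C h s r) = (\<lambda>y. \<Sum>x\<leftarrow>r. 0)"
    unfolding linext_inst split_def using h
    by (intro ext arg_cong[where f = sum_list] map_cong)
      (auto simp: lie_part_def bracket_only_plug bracket_only_subst)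
  then have "linext lie_part (inst a C h s r) = 0" by (simp add: fun_eq_iff)
  then show ?thesis by (simp only: ideal.zero)
qed

lemma linext_lie_part_ideal: "v \<in> ideal arb_rels n \<Longrightarrow> linext lie_part v \<in> ideal lie_rels n"
  by (rule linext_ideal_in_ideal) (rule linext_lie_part_inst_in_ideal)

lemma sum_rel_caseI:
  "u \<in> ideal lie_rels n \<Longrightarrow> w \<in> ideal ass_rels n \<Longrightarrow>
   (\<lambda>x. case x of Inl a \<Rightarrow> u a | Inr b \<Rightarrow> w b) \<in> sum_rel n"
  unfolding sum_rel_def by blast

lemma zero_in_sum_rel: "0 \<in> sum_rel n"
proof -
  have "(0 :: lieop tree + assop tree \<Rightarrow> 'k::field) =
      (\<lambda>x. case x of Inl a \<Rightarrow> (0 :: lieop tree \<Rightarrow> 'k) a | Inr b \<Rightarrow> (0 :: assop tree \<Rightarrow> 'k) b)"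
    by (auto simp: fun_eq_iff split: sum.splits)
  then show ?thesis using sum_rel_caseI[OF ideal.zero ideal.zero] by metis
qed

lemma sum_rel_add: "a \<in> sum_rel n \<Longrightarrow> b \<in> sum_rel n \<Longrightarrow> a + b \<in> sum_rel n"
  unfolding sum_rel_def
  by (auto intro!: exI[of _ "_ + _"] ideal_add simp: fun_eq_iff split: sum.splits)

lemma sum_rel_scale: "a \<in> sum_rel n \<Longrightarrow> (\<lambda>y. c * a y) \<in> sum_rel n"
  unfolding sum_rel_def
  by (auto intro!: exI[of _ "\<lambda>y. c * _ y"] ideal_scale simp: fun_eq_iff split: sum.splits)

lemma linext_arb_map_ideal:
  "v \<in> ideal arb_rels n \<Longrightarrow> linext arb_map v \<in> (sum_rel n :: (_ \<Rightarrow> 'k::field) set)"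
proof -
  assume v: "v \<in> ideal arb_rels n"
  have "linext arb_map v =
      (\<lambda>x. case x of Inl a \<Rightarrow> linext lie_part v a | Inr b \<Rightarrow> (0 :: assop tree \<Rightarrow> 'k) b)"
    unfolding linext_arb_map linext_ass_part linext_word_poly_ideal[OF v]
    by (auto simp: fun_eq_iff split: sum.splits)
  then show ?thesis using sum_rel_caseI[OF linext_lie_part_ideal[OF v] ideal.zero] by metis
qed

section \<open>Normal forms\<close>

definition args3 :: "'o tree \<Rightarrow> 'o tree \<Rightarrow> 'o tree \<Rightarrow> nat \<Rightarrow> 'o tree" where
  "args3 X Y Z = (\<lambda>i. if i = 0 then X else if i = 1 then Y else Z)"

lemma args3_simps [simp]: "args3 X Y Z 0 = X" "args3 X Y Z (Suc 0) = Y" "args3 X Y Z 2 = Z"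
  by (auto simp: args3_def)

text \<open>Reassociating \<open>x(yz)\<close> to \<open>(xy)z\<close> strictly decreases the total size of right subtrees.\<close>

fun right_weight :: "'o tree \<Rightarrow> nat" where
  "right_weight (Leaf i) = 0"
| "right_weight (Node g l r) = right_weight l + right_weight r + length (leaves r)"

lemma ass_reassoc_step:
  assumes "\<not> left_comb AssMul b" and "h \<notin> set (leaves b)"
  shows "\<exists>C x y z. h \<in> set (leaves C) \<and> b = plug C h (Node AssMul x (Node AssMul y z))
     \<and> right_weight (plug C h (Node AssMul (Node AssMul x y) z)) < right_weight b"
  using assms
proof (induction b)
  case (Node g l r)
  have g: "g = AssMul" by (cases g) simp
  show ?case
  proof (cases r)
    case (Node g' y z)
    have "g' = AssMul" by (cases g') simp
    moreover have "0 < length (leaves z)" using leaves_ne_Nil[of z] by simp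
    ultimately show ?thesis using Node g
      by (intro exI[of _ "Leaf h"] exI[of _ l] exI[of _ y] exI[of _ z]) auto
  next
    case (Leaf j)
    with Node.prems g have "\<not> left_comb AssMul l" "h \<notin> set (leaves l)" "h \<noteq> j" by auto
    with Node.IH(1) obtain C x y z where
      C: "h \<in> set (leaves C)" "l = plug C h (Node AssMul x (Node AssMul y z))"
         "right_weight (plug C h (Node AssMul (Node AssMul x y) z)) < right_weight l" by blast
    with Leaf g \<open>h \<noteq> j\<close> show ?thesis
      by (intro exI[of _ "Node g C (Leaf j)"] exI[of _ x] exI[of _ y] exI[of _ z]) auto
  qed
qed simp

lemma comb_minus_in_ass_ideal:
  "multilin n b \<Longrightarrow>
   single (comb AssMul (leaves b)) 1 - single b 1 \<in> (ideal ass_rels n :: (_ \<Rightarrow> 'k::field) set)"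
proof (induction "right_weight b" arbitrary: b rule: less_induct)
  case less
  show ?case
  proof (cases "left_comb AssMul b")
    case True
    then show ?thesis by (simp add: comb_leaves ideal.zero)
  next
    case False
    have "n \<notin> set (leaves b)" using multilin_leaf_less[OF less.prems] by blast
    from ass_reassoc_step[OF False this] obtain C x y z where
      C: "n \<in> set (leaves C)" "b = plug C n (Node AssMul x (Node AssMul y z))"
         "right_weight (plug C n (Node AssMul (Node AssMul x y) z)) < right_weight b" by blast
    define b' where "b' = plug C n (Node AssMul (Node AssMul x y) z)"
    have leaves_b': "leaves b' = leaves b" unfolding b'_def C(2) by (rule leaves_plug_cong) simp
    then have "multilin n b'" using less.prems by (simp add: multilin_def)
    then have IH: "single (comb AssMul (leaves b')) 1 - single b' 1 \<in> (ideal ass_rels n :: (_ \<Rightarrow> 'k) set)"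
      using less.hyps[OF C(3)[folded b'_def]] by blast
    have rel: "inst 1 C n (args3 x y z) (hd ass_rels) \<in> (ideal ass_rels n :: (_ \<Rightarrow> 'k) set)"
      by (rule inst_in_ideal)
        (use C less.prems \<open>multilin n b'\<close> in \<open>auto simp: ass_rels_def b'_def\<close>)
    have rel_eq: "inst 1 C n (args3 x y z) (hd ass_rels) = (single b' 1 - single b 1 :: _ \<Rightarrow> 'k)"
      by (auto simp: ass_rels_def b'_def C(2) fun_eq_iff single_def)
    have "(single (comb AssMul (leaves b)) 1 - single b 1 :: _ \<Rightarrow> 'k)
       = (single (comb AssMul (leaves b')) 1 - single b' 1) + inst 1 C n (args3 x y z) (hd ass_rels)"
      unfolding rel_eq leaves_b' by simp
    then show ?thesis using ideal_add[OF IH rel] by (simp only:)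
  qed
qed

lemma linext_leaves_ass_ideal:
  fixes w :: "assop tree \<Rightarrow> 'k::field"
  shows "w \<in> ideal ass_rels n \<Longrightarrow> linext (\<lambda>b. single (leaves b) 1) w = 0"
proof (rule linext_ideal_eq_0)
  fix r :: "('k, assop) rel" and h C and s :: "nat \<Rightarrow> assop tree" and a
  assume "r \<in> set ass_rels"
  then have r: "r = [(1, Node AssMul (Node AssMul (L 0) (L 1)) (L 2)),
                     (-1, Node AssMul (L 0) (Node AssMul (L 1) (L 2)))]"
    by (simp add: ass_rels_def)
  have "leaves (plug C h (Node AssMul (Node AssMul (s 0) (s 1)) (s 2)))
      = leaves (plug C h (Node AssMul (s 0) (Node AssMul (s 1) (s 2))))"
    by (rule leaves_plug_cong) simp
  then show "linext (\<lambda>b. single (leaves b) 1) (inst a C h s r) = 0"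
    unfolding linext_inst r by (simp add: fun_eq_iff)
qed

fun bracket_count :: "arbop tree \<Rightarrow> nat" where
  "bracket_count (Leaf i) = 0"
| "bracket_count (Node g l r) = (if g = Br then 1 else 0) + bracket_count l + bracket_count r"

lemma bracket_count_plug_less:
  "bracket_count u' < bracket_count u \<Longrightarrow> h \<in> set (leaves C) \<Longrightarrow>
   bracket_count (plug C h u') < bracket_count (plug C h u)"
proof -
  assume "bracket_count u' < bracket_count u"
  then have "(h \<in> set (leaves C) \<longrightarrow> bracket_count (plug C h u') < bracket_count (plug C h u))
       \<and> bracket_count (plug C h u') \<le> bracket_count (plug C h u)"
    by (induction C) auto
  then show "h \<in> set (leaves C) \<Longrightarrow> ?thesis" by blast
qed

definition plug_decomp :: "('o tree \<Rightarrow> bool) \<Rightarrow> nat \<Rightarrow> 'o tree \<Rightarrow> bool" where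
  "plug_decomp P h t \<longleftrightarrow> (\<exists>C u. h \<in> set (leaves C) \<and> t = plug C h u \<and> P u)"

lemma plug_decompI: "P t \<Longrightarrow> plug_decomp P h t"
  unfolding plug_decomp_def by (rule exI[of _ "Leaf h"]) auto

lemma plug_decomp_Node_left:
  "plug_decomp P h l \<Longrightarrow> h \<notin> set (leaves r) \<Longrightarrow> plug_decomp P h (Node g l r)"
  unfolding plug_decomp_def by (metis plug_Node plug_not_in_leaves leaves.simps(2) Un_iff set_append)

lemma plug_decomp_Node_right:
  "plug_decomp P h r \<Longrightarrow> h \<notin> set (leaves l) \<Longrightarrow> plug_decomp P h (Node g l r)"
  unfolding plug_decomp_def by (metis plug_Node plug_not_in_leaves leaves.simps(2) Un_iff set_append)

definition vanishing_redex :: "arbop tree \<Rightarrow> bool" where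
  "vanishing_redex u \<longleftrightarrow> (\<exists>X Y Z.
     u = Node Br (Node St X Y) Z \<or> u = Node Br Z (Node St X Y) \<or>
     u = Node St (Node Br X Y) Z \<or> u = Node St X (Node St Y Z))"

definition arb_redex :: "arbop tree \<Rightarrow> bool" where
  "arb_redex u \<longleftrightarrow> vanishing_redex u \<or> (\<exists>X Y Z. u = Node St X (Node Br Y Z))"

lemma arb_redex_exists:
  "\<not> bracket_only t \<Longrightarrow> \<not> left_comb St t \<Longrightarrow> h \<notin> set (leaves t) \<Longrightarrow> plug_decomp arb_redex h t"
proof (induction t)
  case (Node g l r)
  show ?case
  proof (cases "arb_redex (Node g l r)")
    case True
    then show ?thesis by (rule plug_decompI)
  next
    case no_redex: False
    show ?thesis
    proof (cases g)
      case St
      show ?thesis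
      proof (cases r)
        case (Node g' Y Z)
        with St no_redex show ?thesis by (cases g') (auto simp: arb_redex_def vanishing_redex_def)
      next
        case (Leaf j)
        have "\<not> bracket_only l"
        proof (cases l)
          case (Leaf i)
          with Node.prems St \<open>r = Leaf j\<close> show ?thesis by simp
        next
          case (Node g'' X Y)
          with no_redex St \<open>r = Leaf j\<close> show ?thesis
            by (cases g'') (auto simp: arb_redex_def vanishing_redex_def)
        qed
        moreover have "\<not> left_comb St l" using Node.prems St Leaf by simp
        ultimately show ?thesis using Node.IH(1) Node.prems Leaf by (auto intro: plug_decomp_Node_left)
      qed
    next
      case Br
      with no_redex have no_St: "\<not> (\<exists>X Y. l = Node St X Y)" "\<not> (\<exists>X Y. r = Node St X Y)"
        by (auto simp: arb_redex_def vanishing_redex_def)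
      have not_comb: "\<not> left_comb St t" if "\<not> bracket_only t" "\<not> (\<exists>X Y. t = Node St X Y)" for t
        using that by (cases t) auto
      show ?thesis
      proof (cases "bracket_only l")
        case False
        with Node.IH(1) Node.prems not_comb no_St(1) show ?thesis
          by (auto intro: plug_decomp_Node_left)
      next
        case True
        with Node.prems Br have "\<not> bracket_only r" by simp
        with Node.IH(2) Node.prems not_comb no_St(2) show ?thesis
          by (auto intro: plug_decomp_Node_right)
      qed
    qed
  qed
qed simp

definition normal_form :: "arbop tree \<Rightarrow> arbop tree \<Rightarrow> 'k::field" where
  "normal_form t = (\<lambda>t'. if left_comb St t' then word_poly t (leaves t') else 0)"

lemma normal_form_left_comb:
  assumes "left_comb St t" and "\<not> bracket_only t"
  shows "(normal_form t :: _ \<Rightarrow> 'k::field) = single t 1"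
proof -
  have "\<not> is_leaf t" using assms(2) by (cases t) auto
  with assms(1) have "(word_poly t :: _ \<Rightarrow> 'k) = single (leaves t) 1" by (rule word_poly_left_comb)
  with assms(1) show ?thesis
    by (auto simp: normal_form_def fun_eq_iff single_def dest: left_comb_leaves_inj)
qed

lemma single_minus_normal_form_in_ideal_of_single:
  assumes "single t 1 \<in> (ideal arb_rels n :: (_ \<Rightarrow> 'k::field) set)"
  shows "single t 1 - normal_form t \<in> (ideal arb_rels n :: (_ \<Rightarrow> 'k) set)"
proof -
  have "linext word_poly (single t 1 :: _ \<Rightarrow> 'k) = 0" using linext_word_poly_ideal[OF assms] .
  then have "(word_poly t :: _ \<Rightarrow> 'k) = 0" by (simp add: linext_single fun_eq_iff)
  then have "(normal_form t :: _ \<Rightarrow> 'k) = 0" by (simp add: normal_form_def fun_eq_iff)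
  with assms show ?thesis by simp
qed

lemma single_minus_normal_form_in_ideal_three_terms:
  fixes t t1 t2 :: "arbop tree"
  assumes rel: "single t 1 - single t1 1 + single t2 1 \<in> (ideal arb_rels n :: (_ \<Rightarrow> 'k::field) set)"
    and t1: "single t1 1 - normal_form t1 \<in> (ideal arb_rels n :: (_ \<Rightarrow> 'k) set)"
    and t2: "single t2 1 - normal_form t2 \<in> (ideal arb_rels n :: (_ \<Rightarrow> 'k) set)"
  shows "single t 1 - normal_form t \<in> (ideal arb_rels n :: (_ \<Rightarrow> 'k) set)"
proof -
  have "finite (supp (single t 1 - single t1 1 :: _ \<Rightarrow> 'k))"
    by (rule finite_subset[of _ "{t, t1}"]) (auto simp: single_def)
  then have "linext word_poly (single t 1 - single t1 1 + single t2 1 :: _ \<Rightarrow> 'k) =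
      word_poly t - word_poly t1 + word_poly t2"
    by (simp only: linext_add linext_diff finite_supp_single linext_single) (simp add: fun_eq_iff)
  then have "(word_poly t :: _ \<Rightarrow> 'k) = word_poly t1 - word_poly t2"
    using linext_word_poly_ideal[OF rel] by (simp add: fun_eq_iff algebra_simps)
  then have "(normal_form t :: _ \<Rightarrow> 'k) = normal_form t1 - normal_form t2"
    by (simp add: normal_form_def fun_eq_iff)
  then have "(single t 1 - normal_form t :: _ \<Rightarrow> 'k) =
      (single t 1 - single t1 1 + single t2 1) + (single t1 1 - normal_form t1) - (single t2 1 - normal_form t2)"
    by (simp add: algebra_simps)
  then show ?thesis using ideal_diff[OF ideal_add[OF rel t1] t2] by (simp only:)
qed

lemma arb_rels_mem:
  "[(1, Node Br (L 0) (L 1)), (1, Node Br (L 1) (L 0))] \<in> set arb_rels"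
  "[(1, Node St (Node Br (L 0) (L 1)) (L 2))] \<in> set arb_rels"
  "[(1, Node St (L 0) (Node St (L 1) (L 2)))] \<in> set arb_rels"
  "[(1, Node Br (Node St (L 0) (L 1)) (L 2))] \<in> set arb_rels"
  "[(1, Node St (L 0) (Node Br (L 1) (L 2))), (-1, Node St (Node St (L 0) (L 1)) (L 2)),
    (1, Node St (Node St (L 0) (L 2)) (L 1))] \<in> set arb_rels"
  by (simp_all add: arb_rels_def)

lemma single_in_ideal_of_monomial_rel:
  assumes "[(1::'k::field, T)] \<in> set arb_rels" "h \<in> set (leaves C)" "multilin n (plug C h (subst s T))"
  shows "single (plug C h (subst s T)) 1 \<in> (ideal arb_rels n :: (_ \<Rightarrow> 'k) set)"
proof -
  have "inst (1::'k) C h s [(1, T)] \<in> ideal arb_rels n"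
    using assms by (intro inst_in_ideal) auto
  then show ?thesis by simp
qed

lemma vanishing_redex_in_ideal:
  assumes C: "h \<in> set (leaves C)" and u: "vanishing_redex u" and ml: "multilin n (plug C h u)"
  shows "single (plug C h u) 1 \<in> (ideal arb_rels n :: (_ \<Rightarrow> 'k::field) set)"
proof -
  from u obtain X Y Z where
    "u = Node Br (Node St X Y) Z \<or> u = Node Br Z (Node St X Y) \<or>
     u = Node St (Node Br X Y) Z \<or> u = Node St X (Node St Y Z)"
    unfolding vanishing_redex_def by blast
  then consider (BrSt) "u = Node Br (Node St X Y) Z" | (BrSt') "u = Node Br Z (Node St X Y)"
    | (StBr) "u = Node St (Node Br X Y) Z" | (StSt) "u = Node St X (Node St Y Z)" by blast
  then show ?thesis
  proof cases
    case BrSt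
    then show ?thesis
      using single_in_ideal_of_monomial_rel[OF arb_rels_mem(4) C, where s = "args3 X Y Z"] ml by simp
  next
    case StBr
    then show ?thesis
      using single_in_ideal_of_monomial_rel[OF arb_rels_mem(2) C, where s = "args3 X Y Z"] ml by simp
  next
    case StSt
    then show ?thesis
      using single_in_ideal_of_monomial_rel[OF arb_rels_mem(3) C, where s = "args3 X Y Z"] ml by simp
  next
    case BrSt'
    define t' where "t' = plug C h (Node Br (Node St X Y) Z)"
    have ml': "multilin n t'"
      unfolding t'_def using ml BrSt' by (rule_tac multilin_plug_cong) (auto simp: ac_simps)
    have t': "single t' 1 \<in> (ideal arb_rels n :: (_ \<Rightarrow> 'k) set)"
      using single_in_ideal_of_monomial_rel[OF arb_rels_mem(4) C, where s = "args3 X Y Z"] ml' t'_def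
      by simp
    have antisym: "inst (1::'k) C h (args3 Z (Node St X Y) Z)
        [(1, Node Br (L 0) (L 1)), (1, Node Br (L 1) (L 0))] \<in> ideal arb_rels n"
      using ml ml' BrSt' t'_def by (intro inst_in_ideal[OF arb_rels_mem(1) C]) simp
    have "single (plug C h u) 1 = inst 1 C h (args3 Z (Node St X Y) Z)
        [(1, Node Br (L 0) (L 1)), (1, Node Br (L 1) (L 0))] - (single t' 1 :: _ \<Rightarrow> 'k)"
      by (simp add: BrSt' t'_def fun_eq_iff)
    then show ?thesis using ideal_diff[OF antisym t'] by simp
  qed
qed

lemma leibniz_rel_in_ideal:
  assumes C: "h \<in> set (leaves C)" and ml: "multilin n (plug C h (Node St X (Node Br Y Z)))"
  shows "single (plug C h (Node St X (Node Br Y Z))) 1 - single (plug C h (Node St (Node St X Y) Z)) 1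
         + single (plug C h (Node St (Node St X Z) Y)) 1 \<in> (ideal arb_rels n :: (_ \<Rightarrow> 'k::field) set)"
proof -
  let ?r = "[(1, Node St (L 0) (Node Br (L 1) (L 2))), (-1, Node St (Node St (L 0) (L 1)) (L 2)),
             (1, Node St (Node St (L 0) (L 2)) (L 1))]"
  have "multilin n (plug C h (Node St (Node St X Y) Z))"
    by (rule multilin_plug_cong[OF ml]) (simp add: ac_simps)
  moreover have "multilin n (plug C h (Node St (Node St X Z) Y))"
    by (rule multilin_plug_cong[OF ml]) (simp add: ac_simps)
  ultimately have "inst (1::'k) C h (args3 X Y Z) ?r \<in> ideal arb_rels n"
    using ml by (intro inst_in_ideal[OF arb_rels_mem(5) C]) simp
  moreover have "single (plug C h (Node St X (Node Br Y Z))) 1 - single (plug C h (Node St (Node St X Y) Z)) 1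
      + single (plug C h (Node St (Node St X Z) Y)) 1 = inst (1::'k) C h (args3 X Y Z) ?r"
    by (simp add: fun_eq_iff single_def)
  ultimately show ?thesis by (simp only:)
qed

lemma single_minus_normal_form_in_ideal:
  "multilin n t \<Longrightarrow> \<not> bracket_only t \<Longrightarrow>
   single t 1 - normal_form t \<in> (ideal arb_rels n :: (_ \<Rightarrow> 'k::field) set)"
proof (induction "bracket_count t" arbitrary: t rule: less_induct)
  case less
  show ?case
  proof (cases "left_comb St t")
    case True
    then show ?thesis
      using normal_form_left_comb[OF True less.prems(2)] ideal.zero by (metis diff_self)
  next
    case False
    have "n \<notin> set (leaves t)" using multilin_leaf_less[OF less.prems(1)] by blast
    with arb_redex_exists[OF less.prems(2) False] obtain C u where
      C: "n \<in> set (leaves C)" "t = plug C n u" and u: "arb_redex u"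
      unfolding plug_decomp_def by blast
    show ?thesis
    proof (cases "vanishing_redex u")
      case True
      then show ?thesis
        using vanishing_redex_in_ideal C less.prems(1) single_minus_normal_form_in_ideal_of_single
        by metis
    next
      case False
      with u obtain X Y Z where u: "u = Node St X (Node Br Y Z)" unfolding arb_redex_def by blast
      let ?t1 = "plug C n (Node St (Node St X Y) Z)" and ?t2 = "plug C n (Node St (Node St X Z) Y)"
      have ml: "multilin n (plug C n u)" using less.prems(1) C by simp
      have "multilin n ?t1" "multilin n ?t2"
        by (rule multilin_plug_cong[OF ml], simp add: u ac_simps)+
      moreover have "\<not> bracket_only ?t1" "\<not> bracket_only ?t2"
        using C(1) by (simp_all add: bracket_only_plug)
      moreover have "bracket_count ?t1 < bracket_count t" "bracket_count ?t2 < bracket_count t"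
        using C u bracket_count_plug_less by auto
      ultimately show ?thesis
        using single_minus_normal_form_in_ideal_three_terms[OF leibniz_rel_in_ideal] less C u by metis
    qed
  qed
qed

section \<open>Injectivity\<close>

text \<open>Left combs are linearly independent modulo associativity, since all reassociations of a
  tree have the same word of leaves.\<close>

lemma comb_combination_in_ass_ideal_eq_0:
  fixes p :: "nat list \<Rightarrow> 'k::field"
  assumes "(\<lambda>b. if left_comb AssMul b then p (leaves b) else 0) \<in> ideal ass_rels n"
    and p_Nil: "p [] = 0"
  shows "p = 0"
proof
  define w where "w = (\<lambda>b. if left_comb AssMul b then p (leaves b) else 0)"
  have w_ideal: "w \<in> ideal ass_rels n" using assms(1) by (simp add: w_def)
  fix x
  show "p x = 0 x"
  proof (cases "x = []")
    case False
    have "linext (\<lambda>b. single (leaves b) 1) w x = (\<Sum>b\<in>supp w. if b = comb AssMul x then w b else 0)"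
      unfolding linext_def
    proof (rule sum.cong[OF refl])
      fix b assume "b \<in> supp w"
      then have "left_comb AssMul b" by (auto simp: w_def split: if_splits)
      then have "leaves b = x \<longleftrightarrow> b = comb AssMul x" by (rule left_comb_eq_iff_leaves[OF False])
      then show "w b * single (leaves b) 1 x = (if b = comb AssMul x then w b else 0)"
        by (auto simp: single_def)
    qed
    also have "\<dots> = w (comb AssMul x)"
      using finite_supp_ideal[OF w_ideal] by (simp add: sum.delta)
    also have "\<dots> = p x" using leaves_comb[OF False] left_comb_comb[OF False] by (metis w_def)
    finally show ?thesis using linext_leaves_ass_ideal[OF w_ideal] by (simp add: fun_eq_iff)
  qed (simp add: p_Nil)
qed

definition of_lie_vec :: "(lieop tree \<Rightarrow> 'k::field) \<Rightarrow> arbop tree \<Rightarrow> 'k" where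
  "of_lie_vec u t = (if bracket_only t then u (to_lie t) else 0)"

lemma of_lie_vec_single: "of_lie_vec (single x c) = single (of_lie x) c"
  by (auto simp: of_lie_vec_def single_def fun_eq_iff of_lie_to_lie)

lemma of_lie_vec_add: "of_lie_vec (u + u') = of_lie_vec u + of_lie_vec u'"
  by (auto simp: of_lie_vec_def fun_eq_iff)

lemma of_lie_vec_zero: "of_lie_vec 0 = 0"
  unfolding of_lie_vec_def by (simp add: fun_eq_iff)

lemma of_lie_vec_inst: "of_lie_vec (inst a C h s rl) = inst a (of_lie C) h (\<lambda>i. of_lie (s i)) (lift_rel rl)"
  by (induction rl)
    (auto simp: lift_rel_def of_lie_vec_add of_lie_vec_single of_lie_vec_zero[unfolded zero_fun_def]
      of_lie_plug_subst)

lemma of_lie_vec_ideal: "u \<in> ideal lie_rels n \<Longrightarrow> of_lie_vec u \<in> ideal arb_rels n"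
proof (induction rule: ideal.induct)
  case zero
  then show ?case by (simp only: of_lie_vec_zero ideal.zero)
next
  case (step r h C s v a)
  have "inst a (of_lie C) h (\<lambda>i. of_lie (s i)) (lift_rel r) \<in> ideal arb_rels n"
  proof (rule inst_in_ideal[OF lift_rel_in_arb_rels[OF step.hyps(1)]])
    show "h \<in> set (leaves (of_lie C))" using step.hyps(2) by simp
    show "\<forall>(c, t)\<in>set (lift_rel r). multilin n (plug (of_lie C) h (subst (\<lambda>i. of_lie (s i)) t))"
    proof clarify
      fix c t assume "(c, t) \<in> set (lift_rel r)"
      then obtain t' where t': "(c, t') \<in> set r" "t = of_lie t'" by (auto simp: lift_rel_def)
      then have "multilin n (plug C h (subst s t'))" using step.hyps(3) by auto
      then show "multilin n (plug (of_lie C) h (subst (\<lambda>i. of_lie (s i)) t))"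
        using of_lie_plug_subst[of C h s t'] t'(2) by (metis multilin_def leaves_of_lie)
    qed
  qed
  then show ?case using ideal_add[OF _ step.IH] by (simp only: of_lie_vec_add of_lie_vec_inst)
qed

lemma bracket_only_part_in_ideal:
  assumes v: "v \<in> vspace (comp_basis n)" and lie: "linext lie_part v \<in> ideal lie_rels n"
  shows "(\<lambda>t. if bracket_only t then v t else 0) \<in> ideal arb_rels n"
proof -
  have "(\<lambda>t. if bracket_only t then v t else 0) = of_lie_vec (linext lie_part v)"
  proof
    fix t
    show "(if bracket_only t then v t else 0) = of_lie_vec (linext lie_part v) t"
    proof (cases "bracket_only t")
      case True
      have "linext lie_part v (to_lie t) = (\<Sum>t'\<in>supp v. if t' = t then v t' else 0)"
        unfolding linext_def
        by (rule sum.cong[OF refl])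
          (use True of_lie_to_lie in \<open>auto simp: lie_part_def single_def, metis\<close>)
      also have "\<dots> = v t" using v by (auto simp: sum.delta vspace_def)
      finally show ?thesis using True by (simp add: of_lie_vec_def)
    qed (simp add: of_lie_vec_def)
  qed
  with of_lie_vec_ideal[OF lie] show ?thesis by simp
qed

lemma product_part_in_ideal:
  assumes v: "v \<in> vspace (comp_basis n)" and word: "linext word_poly v = 0"
  shows "(\<lambda>t. if bracket_only t then 0 else v t) \<in> ideal arb_rels n"
proof -
  define A where "A = {t \<in> supp v. \<not> bracket_only t}"
  have A: "finite A" "\<And>t. t \<in> A \<Longrightarrow> multilin n t \<and> \<not> bracket_only t"
    using v by (auto simp: A_def vspace_def comp_basis_def)
  have "(\<Sum>t\<in>A. (\<lambda>y. v t * (single t 1 - normal_form t) y)) \<in> ideal arb_rels n"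
    using A by (intro ideal_sum ideal_scale single_minus_normal_form_in_ideal) auto
  moreover have "(\<Sum>t\<in>A. (\<lambda>y. v t * (single t 1 - normal_form t) y)) = (\<lambda>t. if bracket_only t then 0 else v t)"
  proof
    fix y
    have "(\<Sum>t\<in>A. v t * single t 1 y) = (if bracket_only y then 0 else v y)"
      using A(1) by (auto simp: single_def A_def if_distrib sum.delta cong: if_cong)
    moreover have "(\<Sum>t\<in>A. v t * normal_form t y) = 0"
    proof (cases "left_comb St y")
      case True
      have "(\<Sum>t\<in>A. v t * normal_form t y) = (\<Sum>t\<in>supp v. v t * word_poly t (leaves y))"
        unfolding A_def normal_form_def using True v
        by (intro sum.mono_neutral_cong_left) (auto simp: word_poly_bracket_only vspace_def)
      also have "\<dots> = linext word_poly v (leaves y)" by (simp add: linext_def)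
      finally show ?thesis using word by simp
    qed (simp add: normal_form_def)
    ultimately show "(\<Sum>t\<in>A. (\<lambda>y. v t * (single t 1 - normal_form t) y)) y
        = (if bracket_only y then 0 else v y)"
      by (simp add: sum_apply sum_subtractf right_diff_distrib)
  qed
  ultimately show ?thesis by simp
qed

lemma ideal_of_linext_arb_map:
  assumes v: "v \<in> vspace (comp_basis n)" and S: "linext arb_map v \<in> sum_rel n"
  shows "v \<in> ideal arb_rels n"
proof -
  from S obtain u w where uw: "linext arb_map v = (\<lambda>x. case x of Inl a \<Rightarrow> u a | Inr b \<Rightarrow> w b)"
    "u \<in> ideal lie_rels n" "w \<in> ideal ass_rels n"
    unfolding sum_rel_def by blast
  have "linext lie_part v = u"
    using fun_cong[OF uw(1), of "Inl _"] by (simp add: linext_arb_map fun_eq_iff)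
  with uw(2) have lie: "linext lie_part v \<in> ideal lie_rels n" by simp
  have w: "w = (\<lambda>b. if left_comb AssMul b then linext word_poly v (leaves b) else 0)"
    using fun_cong[OF uw(1), of "Inr _"] by (simp add: linext_arb_map linext_ass_part fun_eq_iff)
  have "linext word_poly v = 0"
    by (rule comb_combination_in_ass_ideal_eq_0) (use uw(3) w in simp, simp add: linext_def word_poly_Nil)
  with v lie have "(\<lambda>t. if bracket_only t then v t else 0) + (\<lambda>t. if bracket_only t then 0 else v t)
      \<in> ideal arb_rels n"
    by (intro ideal_add bracket_only_part_in_ideal product_part_in_ideal)
  moreover have "(\<lambda>t. if bracket_only t then v t else 0) + (\<lambda>t. if bracket_only t then 0 else v t) = v"
    by (simp add: fun_eq_iff)
  ultimately show ?thesis by (simp only:)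
qed

section \<open>Surjectivity\<close>

lemma arb_map_in_vspace:
  assumes t: "t \<in> comp_basis n"
  shows "(arb_map t :: _ \<Rightarrow> 'k::field) \<in> vspace (sum_basis n)"
proof -
  let ?W = "{w. set w \<subseteq> {0..<n} \<and> length w = n}"
  let ?B = "Inl ` {to_lie t} \<union> Inr ` (comb AssMul ` ?W)"
  have ml: "mset (leaves t) = mset [0..<n]" using t by (simp add: comp_basis_def multilin_def)
  have "supp (arb_map t :: _ \<Rightarrow> 'k) \<subseteq> ?B \<inter> sum_basis n"
  proof
    fix x assume x: "x \<in> supp (arb_map t :: _ \<Rightarrow> 'k)"
    show "x \<in> ?B \<inter> sum_basis n"
    proof (cases x)
      case (Inl a)
      with x have "a = to_lie t" by (auto simp: arb_map_def lie_part_def single_def split: if_splits)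
      moreover have "multilin n (to_lie t)" using t by (simp add: comp_basis_def multilin_def)
      ultimately show ?thesis using Inl by (auto simp: sum_basis_def comp_basis_def)
    next
      case (Inr b)
      with x have comb: "left_comb AssMul b" and nonzero: "(word_poly t (leaves b) :: 'k) \<noteq> 0"
        by (auto simp: arb_map_def ass_part_def split: if_splits)
      have m: "multilin n b" using word_poly_nonzero_mset[OF nonzero] ml by (simp add: multilin_def)
      then have "leaves b \<in> ?W"
        using multilin_length multilin_leaf_less by fastforce
      then have "b \<in> comb AssMul ` ?W" using comb_leaves[OF comb] by (metis image_eqI)
      with Inr m show ?thesis by (auto simp: sum_basis_def comp_basis_def)
    qed
  qed
  moreover have "finite ?W" using finite_lists_length_eq[of "{0..<n}" n] by simp
  ultimately show ?thesis unfolding vspace_def by (auto intro: finite_subset)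
qed

lemma arb_map_of_lie: "arb_map (of_lie a) = single (Inl a) 1"
  by (auto simp: fun_eq_iff arb_map_def lie_part_def ass_part_def word_poly_bracket_only single_def
      split: sum.splits)

lemma arb_map_comb:
  assumes "2 \<le> length w"
  shows "(arb_map (comb St w) :: _ \<Rightarrow> 'k::field) = single (Inr (comb AssMul w)) 1"
proof -
  have w: "w \<noteq> []" using assms by auto
  have not_bracket: "\<not> bracket_only (comb St w)"
    using assms leaves_comb[OF w, of St] left_comb_comb[OF w, of St]
    by (cases "comb St w") auto
  then have "\<not> is_leaf (comb St w)" by (cases "comb St w") auto
  from word_poly_left_comb[OF left_comb_comb[OF w] this]
  have word: "(word_poly (comb St w) :: _ \<Rightarrow> 'k) = single w 1" by (simp only: leaves_comb[OF w])
  show ?thesis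
  proof
    fix x
    show "(arb_map (comb St w) x :: 'k) = single (Inr (comb AssMul w)) 1 x"
    proof (cases x)
      case (Inl a)
      with not_bracket show ?thesis by (simp add: arb_map_def lie_part_def single_def)
    next
      case (Inr b)
      have "left_comb AssMul b \<and> leaves b = w \<longleftrightarrow> b = comb AssMul w"
        using left_comb_eq_iff_leaves[OF w] left_comb_comb[OF w] by metis
      with Inr word show ?thesis by (auto simp: arb_map_def ass_part_def single_def)
    qed
  qed
qed

lemma basis_preimage:
  assumes n: "2 \<le> n" and e: "e \<in> sum_basis n"
  shows "\<exists>v\<in>vspace (comp_basis n). linext arb_map v - single e 1 \<in> (sum_rel n :: (_ \<Rightarrow> 'k::field) set)"
proof (cases e)
  case (Inl a)
  then have "of_lie a \<in> comp_basis n" using e by (auto simp: sum_basis_def comp_basis_def multilin_def)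
  moreover have "linext arb_map (single (of_lie a) 1) - single e 1 = 0"
    by (simp add: linext_single arb_map_of_lie Inl fun_eq_iff)
  ultimately show ?thesis using single_in_vspace zero_in_sum_rel by metis
next
  case (Inr b)
  then have b: "multilin n b" using e by (auto simp: sum_basis_def comp_basis_def)
  then have len: "2 \<le> length (leaves b)" using n multilin_length[OF b] by simp
  then have w: "leaves b \<noteq> []" by auto
  have "leaves (comb St (leaves b)) = leaves b" by (rule leaves_comb[OF w])
  with b have "comb St (leaves b) \<in> comp_basis n" by (simp add: comp_basis_def multilin_def)
  moreover have "linext arb_map (single (comb St (leaves b)) 1) - single e 1
     = (\<lambda>x. case x of Inl a \<Rightarrow> (0 :: _ \<Rightarrow> 'k) a | Inr b' \<Rightarrow> (single (comb AssMul (leaves b)) 1 - single b 1) b')"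
    unfolding linext_single arb_map_comb[OF len] by (auto simp: Inr fun_eq_iff single_def split: sum.splits)
  moreover have "\<dots> \<in> sum_rel n"
    using sum_rel_caseI[OF ideal.zero comb_minus_in_ass_ideal[OF b]] .
  ultimately show ?thesis using single_in_vspace by metis
qed

lemma act_Leaf [simp]: "act \<sigma> (Leaf i) = Leaf (\<sigma> i)"
  by (simp add: act_def)

lemma act_Node [simp]: "act \<sigma> (Node g l r) = Node g (act \<sigma> l) (act \<sigma> r)"
  by (simp add: act_def)

lemma act_act: "act \<sigma> (act \<tau> t) = act (\<sigma> \<circ> \<tau>) t"
  by (induction t) auto

lemma act_id: "act id t = t"
  by (induction t) auto

lemma leaves_act: "leaves (act \<sigma> t) = map \<sigma> (leaves t)"
  by (induction t) auto

lemma is_leaf_act [simp]: "is_leaf (act \<sigma> t) = is_leaf t"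
  by (cases t) auto

lemma left_comb_act: "left_comb g (act \<sigma> t) = left_comb g t"
  by (induction t) auto

lemma bracket_only_act: "bracket_only (act \<sigma> t) = bracket_only t"
  by (induction t) auto

lemma to_lie_act: "to_lie (act \<sigma> t) = act \<sigma> (to_lie t)"
  by (induction t) (auto simp: to_lie_def)

lemma sum_act_sum_act: "sum_act \<sigma> (sum_act \<tau> x) = sum_act (\<sigma> \<circ> \<tau>) x"
  by (cases x) (simp_all add: sum_act_def act_act)

lemma sum_act_id: "sum_act id x = x"
  by (cases x) (simp_all add: sum_act_def act_id)

lemma bij_sum_act:
  assumes "bij \<sigma>"
  shows "bij (sum_act \<sigma>)"
proof (rule o_bij)
  have "\<sigma> \<circ> inv \<sigma> = id" using surj_iff bij_is_surj[OF assms] by blast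
  then show "sum_act \<sigma> \<circ> sum_act (inv \<sigma>) = id"
    by (intro ext) (simp only: o_apply sum_act_sum_act sum_act_id id_apply)
  have "inv \<sigma> \<circ> \<sigma> = id" using inv_o_cancel bij_is_inj[OF assms] by blast
  then show "sum_act (inv \<sigma>) \<circ> sum_act \<sigma> = id"
    by (intro ext) (simp only: o_apply sum_act_sum_act sum_act_id id_apply)
qed

lemma polys_act:
  assumes "inj \<sigma>"
  shows "(\<lambda>w. lie_poly (act \<sigma> t) (map \<sigma> w)) = (lie_poly t :: _ \<Rightarrow> 'k::field)
       \<and> (\<lambda>w. word_poly (act \<sigma> t) (map \<sigma> w)) = (word_poly t :: _ \<Rightarrow> 'k)"
proof (induction t)
  case (Leaf i)
  have "map \<sigma> w = [\<sigma> i] \<longleftrightarrow> w = [i]" for w using assms inj_map_eq_map[of \<sigma> w "[i]"] by auto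
  then show ?case by (auto simp: fun_eq_iff single_def)
next
  case (Node g l r)
  then have "(\<lambda>w. factor_poly (act \<sigma> l) (map \<sigma> w)) = (factor_poly l :: _ \<Rightarrow> 'k)"
    by (simp add: factor_poly_def)
  with Node show ?case
    by (cases g) (simp_all del: word_poly.simps add: word_poly_simps concat_prod_map fun_eq_iff
        fun_diff_def)
qed

lemma arb_map_act: "inj \<sigma> \<Longrightarrow> (arb_map (act \<sigma> t) (sum_act \<sigma> x) :: 'k::field) = arb_map t x"
proof (cases x)
  case (Inl a)
  assume "inj \<sigma>"
  then have "inj (act \<sigma> :: lieop tree \<Rightarrow> _)"
    by (metis act_act act_id inj_on_inverseI inv_o_cancel)
  with Inl show ?thesis
    by (auto simp: arb_map_def sum_act_def lie_part_def bracket_only_act to_lie_act single_def inj_eq)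
next
  case (Inr b)
  assume "inj \<sigma>"
  then have "(word_poly (act \<sigma> t) (map \<sigma> (leaves b)) :: 'k) = word_poly t (leaves b)"
    using polys_act by metis
  with Inr show ?thesis by (simp add: arb_map_def sum_act_def ass_part_def left_comb_act leaves_act)
qed

lemma arb_map_equivariant:
  assumes t: "t \<in> comp_basis n" and \<sigma>: "\<sigma> permutes {0..<n}"
  shows "(arb_map (act \<sigma> t) :: _ \<Rightarrow> 'k::field) = linact sum_act \<sigma> (arb_map t)"
proof
  fix y
  have "bij \<sigma>" using permutes_bij[OF \<sigma>] .
  then obtain x where y: "y = sum_act \<sigma> x" using bij_sum_act bij_is_surj by (metis surj_f_inv_f)
  have "(arb_map t :: _ \<Rightarrow> 'k) \<in> vspace (sum_basis n)" by (rule arb_map_in_vspace[OF t])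
  then have "linext (\<lambda>t. single (sum_act \<sigma> t) 1) (arb_map t :: _ \<Rightarrow> 'k) (sum_act \<sigma> x) = arb_map t x"
    by (intro linext_single_apply_inj bij_is_inj bij_sum_act \<open>bij \<sigma>\<close>) (simp add: vspace_def)
  then show "(arb_map (act \<sigma> t) y :: 'k) = linact sum_act \<sigma> (arb_map t) y"
    unfolding y linact_def by (simp add: arb_map_act[OF bij_is_inj[OF \<open>bij \<sigma>\<close>]])
qed

lemma comp_basis_one: "comp_basis 1 = {Leaf 0}"
proof -
  have "t = Leaf 0" if "multilin 1 t" for t :: "'o tree"
  proof (cases t)
    case (Node g l r)
    then have "2 \<le> length (leaves t)"
      using leaves_ne_Nil[of l] leaves_ne_Nil[of r] by (cases "leaves l"; cases "leaves r") auto
    with multilin_length[OF that] show ?thesis by simp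
  qed (use that in \<open>simp add: multilin_def\<close>)
  then show ?thesis by (auto simp: comp_basis_def multilin_def)
qed

lemma vspace_singleton: "v \<in> vspace {b} \<Longrightarrow> v = single b (v b)"
  by (auto simp: vspace_def single_def fun_eq_iff)

lemma ideal_arity_one_eq:
  "\<forall>r\<in>set rels. \<forall>(c, t)\<in>set r. 2 \<le> length (leaves t) \<Longrightarrow> ideal rels 1 = {0}"
  using ideal_arity_one ideal.zero by blast

lemma quot_iso_arity_one:
  "quot_iso (comp_basis 1) (ideal arb_rels 1 :: (arbop tree \<Rightarrow> 'k::field) set) act
            (comp_basis 1) (ideal ass_rels 1 :: (assop tree \<Rightarrow> 'k) set) act 1"
proof -
  have ideals: "ideal arb_rels 1 = {0}" "ideal ass_rels 1 = {0}"
    by (rule ideal_arity_one_eq, simp add: arb_rels_def ass_rels_def)+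
  let ?f = "\<lambda>t :: arbop tree. single (Leaf 0 :: assop tree) (1::'k)"
  have linext_f: "linext ?f v = single (Leaf 0) (v (Leaf 0))" if "v \<in> vspace {Leaf 0}" for v
    by (subst vspace_singleton[OF that]) (simp only: linext_single, simp add: single_def fun_eq_iff)
  show ?thesis
    unfolding quot_iso_def comp_basis_one ideals
  proof (intro exI[of _ ?f] conjI ballI allI impI)
    fix v :: "arbop tree \<Rightarrow> 'k" assume v: "v \<in> vspace {Leaf 0}" and "linext ?f v \<in> {0}"
    then have "single (Leaf 0 :: assop tree) (v (Leaf 0)) = 0" using linext_f by simp
    from fun_cong[OF this, of "Leaf 0"] have "v (Leaf 0) = 0" by (simp add: single_def)
    with v show "v \<in> {0}" by (auto simp: vspace_def fun_eq_iff)
  next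
    fix w :: "assop tree \<Rightarrow> 'k" assume w: "w \<in> vspace {Leaf 0}"
    have "single (Leaf 0) (w (Leaf 0)) \<in> vspace {Leaf 0 :: arbop tree}" by (simp add: single_in_vspace)
    moreover have "linext ?f (single (Leaf 0) (w (Leaf 0))) - w = 0"
      using w by (simp only: linext_single) (auto simp: single_def fun_eq_iff vspace_def)
    ultimately show "\<exists>v\<in>vspace {Leaf 0}. linext ?f v - w \<in> {0}" by blast
  next
    fix \<sigma> :: "nat \<Rightarrow> nat" and t :: "arbop tree" assume "\<sigma> permutes {0..<1}"
    then have "\<sigma> 0 = 0" using permutes_in_image[of \<sigma> "{0..<1}" 0] by simp
    then have "linact act \<sigma> (?f t) = ?f (act \<sigma> t)"
      by (simp only: linact_def linext_single) (simp add: single_def fun_eq_iff)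
    then show "?f (act \<sigma> t) - linact act \<sigma> (?f t) \<in> {0}" by simp
  qed (simp_all add: single_in_vspace)
qed

lemma quot_iso_arb_sum:
  assumes "2 \<le> n"
  shows "quot_iso (comp_basis n) (ideal arb_rels n :: (arbop tree \<Rightarrow> 'k::field) set) act
                  (sum_basis n) (sum_rel n) sum_act n"
  unfolding quot_iso_def
proof (intro exI[of _ arb_map] conjI ballI allI impI)
  fix w :: "lieop tree + assop tree \<Rightarrow> 'k" assume "w \<in> vspace (sum_basis n)"
  then show "\<exists>v\<in>vspace (comp_basis n). linext arb_map v - w \<in> sum_rel n"
    using basis_preimage[OF assms]
    by (intro surj_mod_subspace_from_basis[OF _ zero_in_sum_rel sum_rel_add sum_rel_scale]) auto
next
  fix \<sigma> and t :: "arbop tree" assume "\<sigma> permutes {0..<n}" "t \<in> comp_basis n"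
  then show "arb_map (act \<sigma> t) - linact sum_act \<sigma> (arb_map t) \<in> (sum_rel n :: (_ \<Rightarrow> 'k) set)"
    by (simp add: arb_map_equivariant zero_in_sum_rel)
qed (simp_all add: arb_map_in_vspace linext_arb_map_ideal ideal_of_linext_arb_map)

theorem mainTheorem20:
  shows "quot_iso (comp_basis 1) (ideal arb_rels 1 :: (arbop tree \<Rightarrow> 'k::field_char_0) set) act
                  (comp_basis 1) (ideal ass_rels 1 :: (assop tree \<Rightarrow> 'k) set) act 1
       \<and> (\<forall>n\<ge>2. quot_iso (comp_basis n) (ideal arb_rels n :: (arbop tree \<Rightarrow> 'k) set) act
                          (sum_basis n) (sum_rel n :: (lieop tree + assop tree \<Rightarrow> 'k) set) sum_act n)"
  using quot_iso_arity_one quot_iso_arb_sum by blast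

end
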